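(* Let $(F_i,g_{F_i})$, $i=1,\dots,m$, be Ricci-flat Riemannian manifolds with $s_i=\dim F_i$, let $p_1,\dots,p_m\in\mathbb{R}$, and set $\zeta=\sum_l s_lp_l$, $\eta=\sum_l s_lp_l^2$. Let $\bar\zeta,\bar\eta\in\mathbb{R}\setminus\{0\}$ with $\bar\zeta^2=\bar\eta$, and let $\psi(t)=at+b$ with $a,b\ge0$ and $a^2+b^2>0$. If $\zeta=\bar\zeta$, $\eta=\bar\eta$, and $\zeta-p_i\neq0$, $\eta-p_i\zeta\neq0$ for all $i$, then $M=(0,\infty)\times F_1\times\cdots\times F_m$ with metric $g=-\mathrm{d}t^2\oplus\varphi^{2p_1}g_{F_1}\oplus\cdots\oplus\varphi^{2p_m}g_{F_m}$, where $\varphi=\psi^{1/\zeta}$, is a Ricci-flat space-time.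
   Context: The metric means $\pi^*(-\mathrm{d}t^2)+\sum_i(\varphi\circ\pi)^{2p_i}\sigma_i^*(g_{F_i})$ with $\pi,\sigma_i$ the projections onto $(0,\infty)$ and $F_i$. *)

theory Defs
  imports "HOL-Analysis.Analysis"
begin

text \<open>Ricci-flatness is a local property, so manifolds are represented by arbitrary
coordinate charts (open subsets of R^n with a smooth metric).\<close>

definition coord_space :: "nat \<Rightarrow> (nat \<Rightarrow> real) set" where
  "coord_space n = {x. \<forall>k\<ge>n. x k = 0}"

definition pd :: "nat \<Rightarrow> ((nat \<Rightarrow> real) \<Rightarrow> real) \<Rightarrow> (nat \<Rightarrow> real) \<Rightarrow> real" where
  "pd k f x = deriv (\<lambda>h. f (x(k := x k + h))) 0"

fun ipd :: "nat list \<Rightarrow> ((nat \<Rightarrow> real) \<Rightarrow> real) \<Rightarrow> (nat \<Rightarrow> real) \<Rightarrow> real" where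
  "ipd [] f = f"
| "ipd (k # ks) f = pd k (ipd ks f)"

definition smooth_on :: "nat \<Rightarrow> (nat \<Rightarrow> real) set \<Rightarrow> ((nat \<Rightarrow> real) \<Rightarrow> real) \<Rightarrow> bool" where
  "smooth_on n U f \<longleftrightarrow>
     (\<forall>ks. set ks \<subseteq> {..<n} \<longrightarrow>
        continuous_on U (ipd ks f) \<and>
        (\<forall>x\<in>U. \<forall>k<n. (\<lambda>h. ipd ks f (x(k := x k + h))) differentiable (at 0)))"

type_synonym metric = "(nat \<Rightarrow> real) \<Rightarrow> nat \<Rightarrow> nat \<Rightarrow> real"

definition is_inverse_mat :: "nat \<Rightarrow> (nat \<Rightarrow> nat \<Rightarrow> real) \<Rightarrow> (nat \<Rightarrow> nat \<Rightarrow> real) \<Rightarrow> bool" where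
  "is_inverse_mat n A B \<longleftrightarrow>
     (\<forall>i<n. \<forall>j<n. (\<Sum>k<n. A i k * B k j) = (if i = j then 1 else 0))
     \<and> (\<forall>i j. i \<ge> n \<or> j \<ge> n \<longrightarrow> B i j = 0)"

definition semi_riem_metric :: "nat \<Rightarrow> (nat \<Rightarrow> real) set \<Rightarrow> metric \<Rightarrow> bool" where
  "semi_riem_metric n U g \<longleftrightarrow>
     openin (top_of_set (coord_space n)) U \<and>
     (\<forall>i<n. \<forall>j<n. smooth_on n U (\<lambda>x. g x i j)) \<and>
     (\<forall>x\<in>U. \<forall>i j. g x i j = g x j i) \<and>
     (\<forall>x\<in>U. \<exists>B. is_inverse_mat n (g x) B)"

definition riem_metric :: "nat \<Rightarrow> (nat \<Rightarrow> real) set \<Rightarrow> metric \<Rightarrow> bool" where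
  "riem_metric n U g \<longleftrightarrow> semi_riem_metric n U g \<and>
     (\<forall>x\<in>U. \<forall>v. (\<exists>i<n. v i \<noteq> 0) \<longrightarrow> (\<Sum>i<n. \<Sum>j<n. g x i j * v i * v j) > 0)"

definition inv_metric :: "nat \<Rightarrow> metric \<Rightarrow> metric" where
  "inv_metric n g x = (THE B. is_inverse_mat n (g x) B)"

definition christoffel :: "nat \<Rightarrow> metric \<Rightarrow> nat \<Rightarrow> nat \<Rightarrow> nat \<Rightarrow> (nat \<Rightarrow> real) \<Rightarrow> real" where
  "christoffel n g k i j x =
     (1/2) * (\<Sum>l<n. inv_metric n g x k l *
        (pd i (\<lambda>y. g y j l) x + pd j (\<lambda>y. g y i l) x - pd l (\<lambda>y. g y i j) x))"

definition ricci :: "nat \<Rightarrow> metric \<Rightarrow> (nat \<Rightarrow> real) \<Rightarrow> nat \<Rightarrow> nat \<Rightarrow> real" where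
  "ricci n g x i j =
     (\<Sum>k<n. pd k (christoffel n g k i j) x - pd j (christoffel n g k i k) x)
   + (\<Sum>k<n. \<Sum>l<n. christoffel n g k k l x * christoffel n g l i j x
                    - christoffel n g k j l x * christoffel n g l i k x)"

definition ricci_flat_on :: "nat \<Rightarrow> (nat \<Rightarrow> real) set \<Rightarrow> metric \<Rightarrow> bool" where
  "ricci_flat_on n U g \<longleftrightarrow> (\<forall>x\<in>U. \<forall>i<n. \<forall>j<n. ricci n g x i j = 0)"

definition lorentz_metric :: "nat \<Rightarrow> (nat \<Rightarrow> real) set \<Rightarrow> metric \<Rightarrow> bool" where
  "lorentz_metric n U g \<longleftrightarrow> semi_riem_metric n U g \<and> n \<ge> 1 \<and>
     (\<forall>x\<in>U. g x 0 0 < 0 \<and>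
       (\<forall>v. v 0 = 0 \<longrightarrow> (\<exists>i<n. v i \<noteq> 0) \<longrightarrow> (\<Sum>i<n. \<Sum>j<n. g x i j * v i * v j) > 0))"

text \<open>Multiply warped product (0,inf) x F_1 x ... x F_m in coordinates:
coordinate 0 is t; fibre i (i < m) occupies coordinates off s i ..< off s i + s i.\<close>
definition off :: "(nat \<Rightarrow> nat) \<Rightarrow> nat \<Rightarrow> nat" where
  "off s i = 1 + (\<Sum>l<i. s l)"

definition fib_proj :: "(nat \<Rightarrow> nat) \<Rightarrow> nat \<Rightarrow> (nat \<Rightarrow> real) \<Rightarrow> (nat \<Rightarrow> real)" where
  "fib_proj s i x = (\<lambda>k. if k < s i then x (off s i + k) else 0)"

definition wp_dim :: "nat \<Rightarrow> (nat \<Rightarrow> nat) \<Rightarrow> nat" where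
  "wp_dim m s = 1 + (\<Sum>l<m. s l)"

definition wp_domain :: "nat \<Rightarrow> (nat \<Rightarrow> nat) \<Rightarrow> (nat \<Rightarrow> (nat \<Rightarrow> real) set) \<Rightarrow> (nat \<Rightarrow> real) set" where
  "wp_domain m s U = {x \<in> coord_space (wp_dim m s). x 0 > 0 \<and> (\<forall>i<m. fib_proj s i x \<in> U i)}"

definition wp_metric :: "nat \<Rightarrow> (nat \<Rightarrow> nat) \<Rightarrow> (nat \<Rightarrow> metric) \<Rightarrow> (real \<Rightarrow> real) \<Rightarrow> (nat \<Rightarrow> real) \<Rightarrow> metric" where
  "wp_metric m s g \<phi> p x a b =
     (if a = 0 \<and> b = 0 then -1
      else if (\<exists>i<m. off s i \<le> a \<and> a < off s i + s i \<and> off s i \<le> b \<and> b < off s i + s i)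
      then (let i = (THE i. i < m \<and> off s i \<le> a \<and> a < off s i + s i) in
            (\<phi> (x 0)) powr (2 * p i) * g i (fib_proj s i x) (a - off s i) (b - off s i))
      else 0)"

end

theory Submission
  imports Defs
begin

text \<open>Write T_l = \<phi>^(2 p_l) for the warping factors and H = \<phi>'/\<phi>, so that
T_l' = 2 p_l H T_l. Apart from the Christoffel symbols of the fibres, the only nonzero
Christoffel symbols of the multiply warped product are \<Gamma>^0_ab = p_l H T_l g_ab and
\<Gamma>^a_0b = \<Gamma>^a_b0 = p_l H \<delta>^a_b (a, b in the l-th fibre). Contracting gives
R_00 = -(\<zeta> H' + \<eta> H^2), R_0a = 0, R_ab = 0 across different fibres, and
R_ab = Ric(F_l)_ab + p_l (H' + \<zeta> H^2) T_l g_ab within the l-th fibre.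
For \<phi> = \<psi>^(1/\<zeta>) with \<psi> affine, H = \<psi>'/(\<zeta> \<psi>) solves H' = -\<zeta> H^2; together
with \<eta> = \<zeta>^2 and Ricci-flat fibres every component vanishes.\<close>

lemma continuous_on_coordinate_line: "continuous_on UNIV (\<lambda>h::real. x(k := x k + h))"
proof (intro continuous_on_coordinatewise_then_product)
  fix i show "continuous_on UNIV (\<lambda>h::real. (x(k := x k + h)) i)"
    by (cases "i = k") (auto intro!: continuous_intros)
qed

lemma coord_space_upd: "x \<in> coord_space n \<Longrightarrow> k < n \<Longrightarrow> x(k := v) \<in> coord_space n"
  by (auto simp: coord_space_def)

lemma eventually_coordinate_line_in:
  assumes "openin (top_of_set (coord_space n)) W" "x \<in> W" "k < n"
  shows "eventually (\<lambda>h. x(k := x k + h) \<in> W) (nhds 0)"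
proof -
  obtain V where V: "open V" "W = coord_space n \<inter> V"
    using assms(1) by (auto simp: openin_open)
  have "open ((\<lambda>h::real. x(k := x k + h)) -` V)"
    using continuous_on_coordinate_line V(1) by (metis open_vimage)
  moreover have "0 \<in> (\<lambda>h::real. x(k := x k + h)) -` V" using V assms(2) by simp
  ultimately have "eventually (\<lambda>h. h \<in> (\<lambda>h::real. x(k := x k + h)) -` V) (nhds 0)"
    by (rule eventually_nhds_in_open)
  then show ?thesis
    by (rule eventually_mono) (use V assms in \<open>auto intro: coord_space_upd\<close>)
qed

lemma pd_cong:
  assumes "openin (top_of_set (coord_space n)) W" "x \<in> W" "k < n" "\<And>y. y \<in> W \<Longrightarrow> f y = g y"
  shows "pd k f x = pd k g x"
  unfolding pd_def
  by (rule deriv_cong_ev[OF eventually_mono[OF eventually_coordinate_line_in[OF assms(1-3)]]])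
     (auto simp: assms(4))

lemma coordinate_line_DERIV_cong:
  assumes "openin (top_of_set (coord_space n)) W" "x \<in> W" "k < n" "\<And>y. y \<in> W \<Longrightarrow> f y = g y"
  shows "DERIV (\<lambda>h. f (x(k := x k + h))) 0 :> D \<longleftrightarrow> DERIV (\<lambda>h. g (x(k := x k + h))) 0 :> D"
  by (rule DERIV_cong_ev[OF refl eventually_mono[OF eventually_coordinate_line_in[OF assms(1-3)]] refl])
     (auto simp: assms(4))

lemma pd_eqI: "DERIV (\<lambda>h. f (x(k := x k + h))) 0 :> D \<Longrightarrow> pd k f x = D"
  unfolding pd_def by (rule DERIV_imp_deriv)

lemma pd_const [simp]: "pd k (\<lambda>y. c) x = 0"
  unfolding pd_def by simp

lemma pd_DERIV:
  assumes "(\<lambda>h. f (x(k := x k + h))) differentiable (at 0)"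
  shows "DERIV (\<lambda>h. f (x(k := x k + h))) 0 :> pd k f x"
  using assms unfolding pd_def by (simp add: DERIV_deriv_iff_real_differentiable)

lemma ipd_cong:
  assumes W: "openin (top_of_set (coord_space n)) W" and eq: "\<And>y. y \<in> W \<Longrightarrow> f y = f' y"
  shows "set ks \<subseteq> {..<n} \<Longrightarrow> y \<in> W \<Longrightarrow> ipd ks f y = ipd ks f' y"
proof (induction ks arbitrary: y)
  case Nil then show ?case using eq by simp
next
  case (Cons k ks)
  then show ?case by (simp, intro pd_cong[OF W]) auto
qed

lemma coordinate_line_differentiable_cong:
  assumes W: "openin (top_of_set (coord_space n)) W" "x \<in> W" "k < n"
    and eq: "\<And>y. y \<in> W \<Longrightarrow> f y = f' y"
    and D: "DERIV (\<lambda>h. f' (x(k := x k + h))) 0 :> D'"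
  shows "(\<lambda>h. f (x(k := x k + h))) differentiable (at 0)"
proof -
  have "DERIV (\<lambda>h. f (x(k := x k + h))) 0 :> D' \<longleftrightarrow> DERIV (\<lambda>h. f' (x(k := x k + h))) 0 :> D'"
    by (rule coordinate_line_DERIV_cong) (use W eq in auto)
  with D have "DERIV (\<lambda>h. f (x(k := x k + h))) 0 :> D'" by simp
  then show ?thesis by (auto simp: real_differentiable_def)
qed

lemma smooth_on_cong:
  assumes W: "openin (top_of_set (coord_space n)) W" and eq: "\<And>y. y \<in> W \<Longrightarrow> f y = f' y"
    and sm: "smooth_on n W f'"
  shows "smooth_on n W f"
  unfolding smooth_on_def
proof (intro allI impI conjI ballI)
  fix ks assume ks: "set ks \<subseteq> {..<n}"
  have e: "\<And>y. y \<in> W \<Longrightarrow> ipd ks f y = ipd ks f' y" using ipd_cong[OF W eq ks] .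
  show "continuous_on W (ipd ks f)"
    using sm ks e unfolding smooth_on_def by (metis continuous_on_cong)
  fix x k assume x: "x \<in> W" and k: "k < n"
  have "(\<lambda>h. ipd ks f' (x(k := x k + h))) differentiable (at 0)"
    using sm ks x k unfolding smooth_on_def by blast
  then obtain D' where D': "DERIV (\<lambda>h. ipd ks f' (x(k := x k + h))) 0 :> D'"
    by (auto simp: real_differentiable_def)
  show "(\<lambda>h. ipd ks f (x(k := x k + h))) differentiable (at 0)"
    by (rule coordinate_line_differentiable_cong[OF W x k e D'])
qed

lemma ipd_const: "ipd ks (\<lambda>y. c) = (if ks = [] then (\<lambda>y. c) else (\<lambda>y. 0))"
  by (induction ks) auto

lemma smooth_on_const: "smooth_on n W (\<lambda>y. c)"
  unfolding smooth_on_def by (simp add: ipd_const)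

definition smooth_real_on :: "real set \<Rightarrow> (real \<Rightarrow> real) \<Rightarrow> bool" where
  "smooth_real_on S f \<longleftrightarrow>
     (\<exists>D. (\<forall>t\<in>S. D 0 t = f t) \<and> (\<forall>k. \<forall>t\<in>S. (D k has_real_derivative D (Suc k) t) (at t)))"

section \<open>Block decomposition of the coordinates\<close>

lemma sum_lessThan_add: "(\<Sum>k<a + (b::nat). F k) = (\<Sum>k<a. F k) + (\<Sum>c<b. F (a + c))"
  by (induction b) (auto simp: add.assoc sum.lessThan_Suc)

lemma off_Suc: "off s (Suc l) = off s l + s l"
  by (simp add: off_def)

lemma off_neq_0 [simp]: "off s l \<noteq> 0"
  by (simp add: off_def)

lemma off_add_le_off: "l < l' \<Longrightarrow> off s l + s l \<le> off s l'"
proof (induction l')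
  case (Suc l')
  then show ?case by (cases "l = l'") (auto simp: off_Suc)
qed simp

lemma wp_dim_eq_off: "wp_dim m s = off s m"
  by (simp add: wp_dim_def off_def)

lemma wp_dim_pos: "0 < wp_dim m s"
  by (simp add: wp_dim_def)

lemma off_add_le_wp_dim: "l < m \<Longrightarrow> off s l + s l \<le> wp_dim m s"
  by (metis wp_dim_eq_off off_add_le_off)

lemma off_add_lt_wp_dim: "l < m \<Longrightarrow> c < s l \<Longrightarrow> off s l + c < wp_dim m s"
  using off_add_le_wp_dim[of l m s] by linarith

lemma off_block_unique:
  assumes "c < s l" "off s l' \<le> off s l + c" "off s l + c < off s l' + s l'"
  shows "l' = l"
  using off_add_le_off[where s=s and l=l and l'=l'] off_add_le_off[where s=s and l=l' and l'=l] assms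
  by (cases l l' rule: linorder_cases) auto

lemma off_add_inj:
  assumes "c < s l" "d < s l'" "off s l + c = off s l' + d"
  shows "l = l' \<and> c = d"
proof -
  have "l' = l" by (rule off_block_unique[where s=s and l=l and c=c]) (use assms in linarith)+
  then show ?thesis using assms(3) by simp
qed

lemma wp_index_cases:
  assumes "k < wp_dim m s"
  obtains "k = 0" | l c where "l < m" "c < s l" "k = off s l + c"
proof -
  have "k = 0 \<or> (\<exists>l<m. \<exists>c<s l. k = off s l + c)"
    using assms
  proof (induction m)
    case 0 then show ?case by (simp add: wp_dim_def)
  next
    case (Suc m)
    show ?case
    proof (cases "k < wp_dim m s")
      case True then show ?thesis using Suc.IH less_SucI by blast
    next
      case False
      then have "off s m \<le> k" "k < off s m + s m"
        using Suc.prems by (auto simp: wp_dim_eq_off off_Suc)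
      then show ?thesis by (intro disjI2 exI[of _ m]) (auto intro!: exI[of _ "k - off s m"])
    qed
  qed
  then show ?thesis using that by blast
qed

lemma sum_wp_dim_split:
  "(\<Sum>k<wp_dim m s. F k) = F 0 + (\<Sum>l<m. \<Sum>c<s l. F (off s l + c))"
proof (induction m)
  case 0 then show ?case by (simp add: wp_dim_def)
next
  case (Suc m)
  have "wp_dim (Suc m) s = wp_dim m s + s m" by (simp add: wp_dim_def)
  then show ?case using Suc by (simp add: sum_lessThan_add wp_dim_eq_off add.assoc)
qed

lemma sum_blocks_single:
  fixes s :: "nat \<Rightarrow> nat"
  assumes "l < (m::nat)" "\<And>l' e. l' < m \<Longrightarrow> e < s l' \<Longrightarrow> l' \<noteq> l \<Longrightarrow> F l' e = 0"
  shows "(\<Sum>l'<m. \<Sum>e<s l'. F l' e) = (\<Sum>e<s l. F l e)"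
proof -
  have "(\<Sum>l'<m. \<Sum>e<s l'. F l' e) = (\<Sum>e<s l. F l e) + (\<Sum>l'\<in>{..<m} - {l}. \<Sum>e<s l'. F l' e)"
    by (rule sum.remove) (use assms in auto)
  also have "(\<Sum>l'\<in>{..<m} - {l}. \<Sum>e<s l'. F l' e) = 0"
    by (rule sum.neutral) (use assms in auto)
  finally show ?thesis by simp
qed

lemma sum_blocks_point:
  fixes s :: "nat \<Rightarrow> nat"
  assumes "l < (m::nat)" "c < s l"
    and "\<And>l' d. l' < m \<Longrightarrow> d < s l' \<Longrightarrow> \<not> (l' = l \<and> d = c) \<Longrightarrow> F l' d = 0"
  shows "(\<Sum>l'<m. \<Sum>d<s l'. F l' d) = F l c"
proof -
  have "(\<Sum>l'<m. \<Sum>d<s l'. F l' d) = (\<Sum>d<s l. F l d)"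
    by (rule sum_blocks_single) (use assms in auto)
  also have "\<dots> = F l c + (\<Sum>d\<in>{..<s l} - {c}. F l d)"
    by (rule sum.remove) (use assms in auto)
  also have "(\<Sum>d\<in>{..<s l} - {c}. F l d) = 0"
    by (rule sum.neutral) (use assms in auto)
  finally show ?thesis by simp
qed

lemma fib_proj_off: "c < s l \<Longrightarrow> fib_proj s l x c = x (off s l + c)"
  by (simp add: fib_proj_def)

lemma fib_proj_upd_time: "fib_proj s l (x(0 := v)) = fib_proj s l x"
  by (auto simp: fib_proj_def)

lemma fib_proj_upd_same: "c < s l \<Longrightarrow> fib_proj s l (x(off s l + c := v)) = (fib_proj s l x)(c := v)"
  by (auto simp: fib_proj_def)

lemma fib_proj_upd_other:
  assumes "l \<noteq> l'" "c < s l'"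
  shows "fib_proj s l (x(off s l' + c := v)) = fib_proj s l x"
proof -
  have "off s l + k \<noteq> off s l' + c" if "k < s l" for k
    using off_add_inj[where s=s and l=l and l'=l' and c=k and d=c] that assms by blast
  then show ?thesis by (auto simp: fib_proj_def)
qed

text \<open>In the names of the component lemmas below, \<open>t\<close> stands for the time index 0,
\<open>f\<close> for a fibre index \<open>off s l + c\<close> and \<open>L\<close> for an arbitrary index; a Christoffel
symbol \<open>\<Gamma>\<^sup>K\<^sub>I\<^sub>J\<close> is named with its upper index first.\<close>

lemma wp_metric_tt: "wp_metric m s g \<phi> p x 0 0 = -1"
  by (simp add: wp_metric_def)

lemma wp_metric_tf: "wp_metric m s g \<phi> p x 0 (off s l + c) = 0"
  by (simp add: wp_metric_def)

lemma wp_metric_ft: "wp_metric m s g \<phi> p x (off s l + c) 0 = 0"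
  by (simp add: wp_metric_def)

lemma wp_metric_ff:
  assumes "l < m" "c < s l" "d < s l'"
  shows "wp_metric m s g \<phi> p x (off s l + c) (off s l' + d) =
     (if l = l' then \<phi> (x 0) powr (2 * p l) * g l (fib_proj s l x) c d else 0)"
proof -
  have blocks: "off s i \<le> off s l + c \<and> off s l + c < off s i + s i \<and>
      off s i \<le> off s l' + d \<and> off s l' + d < off s i + s i \<longleftrightarrow> i = l \<and> l' = l" for i
    using off_block_unique[of c s l i] off_block_unique[of d s l' i] assms by auto
  have "(THE i. i < m \<and> off s i \<le> off s l + c \<and> off s l + c < off s i + s i) = l"
    by (rule the_equality) (use assms off_block_unique in auto)
  then show ?thesis using assms unfolding wp_metric_def blocks by (auto simp: Let_def)
qed

lemma wp_metric_outside:
  assumes "A \<ge> wp_dim m s \<or> B \<ge> wp_dim m s"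
  shows "wp_metric m s g \<phi> p x A B = 0"
proof -
  have "\<not> (i < m \<and> A < off s i + s i \<and> B < off s i + s i)" for i
    using assms off_add_le_wp_dim[of i m s] by linarith
  moreover have "\<not> (A = 0 \<and> B = 0)" using assms by (auto simp: wp_dim_def)
  ultimately show ?thesis unfolding wp_metric_def by auto
qed

text \<open>For symmetric A, the transpose of a right inverse is a left inverse, hence equal to
every right inverse.\<close>
lemma is_inverse_mat_transpose:
  assumes sym: "\<And>i j. i < n \<Longrightarrow> j < n \<Longrightarrow> A i j = A j i"
    and B: "is_inverse_mat n A B" and B': "is_inverse_mat n A B'"
  shows "B' i j = B j i"
proof (cases "i < n \<and> j < n")
  case True
  then have i: "i < n" and j: "j < n" by auto
  have "(\<Sum>k<n. (if i = k then 1 else 0) * B' k j) = (\<Sum>k<n. if i = k then B' k j else 0)"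
    by (intro sum.cong) auto
  then have "B' i j = (\<Sum>k<n. (if i = k then 1 else 0) * B' k j)"
    using i by simp
  also have "\<dots> = (\<Sum>k<n. (\<Sum>l<n. A k l * B l i) * B' k j)"
    using B i by (intro sum.cong refl) (auto simp: is_inverse_mat_def)
  also have "\<dots> = (\<Sum>k<n. \<Sum>l<n. B l i * (A l k * B' k j))"
    by (intro sum.cong refl) (auto simp: sum_distrib_right sum_distrib_left sym mult_ac intro!: sum.cong)
  also have "\<dots> = (\<Sum>l<n. B l i * (\<Sum>k<n. A l k * B' k j))"
    by (subst sum.swap) (simp add: sum_distrib_left)
  also have "\<dots> = (\<Sum>l<n. B l i * (if l = j then 1 else 0))"
    using B' j by (intro sum.cong refl) (auto simp: is_inverse_mat_def)
  also have "\<dots> = (\<Sum>l<n. if l = j then B l i else 0)"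
    by (intro sum.cong) auto
  also have "\<dots> = B j i" using j by simp
  finally show ?thesis .
next
  case False
  then show ?thesis using B B' by (auto simp: is_inverse_mat_def)
qed

lemma the_is_inverse_mat:
  assumes sym: "\<And>i j. i < n \<Longrightarrow> j < n \<Longrightarrow> A i j = A j i"
    and B: "is_inverse_mat n A B"
  shows "(THE B. is_inverse_mat n A B) = B"
proof (rule the_equality)
  fix B' assume B': "is_inverse_mat n A B'"
  show "B' = B"
    using is_inverse_mat_transpose[OF sym B B'] is_inverse_mat_transpose[OF sym B B] by (intro ext) metis
qed (rule B)

lemma is_inverse_mat_left:
  assumes sym: "\<And>i j. i < n \<Longrightarrow> j < n \<Longrightarrow> A i j = A j i"
    and B: "is_inverse_mat n A B" and "i < n" "j < n"
  shows "(\<Sum>k<n. B i k * A k j) = (if i = j then 1 else 0)"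
proof -
  have "(\<Sum>k<n. B i k * A k j) = (\<Sum>k<n. A j k * B k i)"
  proof (intro sum.cong refl)
    fix k assume "k \<in> {..<n}"
    then have "A k j = A j k" using sym assms(4) by auto
    moreover have "B i k = B k i" by (rule is_inverse_mat_transpose[OF sym B B])
    ultimately show "B i k * A k j = A j k * B k i" by simp
  qed
  then show ?thesis using B assms(3,4) unfolding is_inverse_mat_def by auto
qed

lemma DERIV_time_line_product:
  assumes "DERIV A (x 0) :> A'"
  shows "DERIV (\<lambda>h. A ((x(0 := x 0 + h)) 0) * B (fib_proj s l (x(0 := x 0 + h)))) 0
           :> A' * B (fib_proj s l x)"
proof -
  have "DERIV (\<lambda>h. A (x 0 + h)) 0 :> A'"
    using DERIV_shift[of A A' 0 "x 0"] assms by (simp add: add.commute)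
  from DERIV_cmult_right[OF this, of "B (fib_proj s l x)"] show ?thesis
    by (simp add: fib_proj_upd_time)
qed

lemma DERIV_fibre_line_product:
  assumes "c < s l" "DERIV (\<lambda>h. B ((fib_proj s l x)(c := fib_proj s l x c + h))) 0 :> B'"
  shows "DERIV (\<lambda>h. A ((x(off s l + c := x (off s l + c) + h)) 0) *
           B (fib_proj s l (x(off s l + c := x (off s l + c) + h)))) 0 :> A (x 0) * B'"
  using DERIV_cmult[OF assms(2), of "A (x 0)"] assms(1) by (simp add: fib_proj_upd_same fib_proj_off)

lemma DERIV_other_fibre_line_product:
  assumes "l \<noteq> l'" "c < s l'"
  shows "DERIV (\<lambda>h. A ((x(off s l' + c := x (off s l' + c) + h)) 0) *
           B (fib_proj s l (x(off s l' + c := x (off s l' + c) + h)))) 0 :> 0"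
  using assms by (simp add: fib_proj_upd_other)

lemma pd_fib_proj_time: "pd 0 (\<lambda>y. B (fib_proj s l y)) x = 0"
  unfolding pd_def by (simp add: fib_proj_upd_time)

lemma pd_fib_proj_same: "c < s l \<Longrightarrow> pd (off s l + c) (\<lambda>y. B (fib_proj s l y)) x = pd c B (fib_proj s l x)"
  unfolding pd_def by (simp add: fib_proj_upd_same fib_proj_off)

lemma pd_fib_proj_other: "l \<noteq> l' \<Longrightarrow> c < s l' \<Longrightarrow> pd (off s l' + c) (\<lambda>y. B (fib_proj s l y)) x = 0"
  unfolding pd_def by (simp add: fib_proj_upd_other)

lemma pd_time_fun_fibre: "pd (off s l + c) (\<lambda>y. A (y 0)) x = 0"
  unfolding pd_def by simp

lemma pd_time_fun_time: "DERIV A (x 0) :> A' \<Longrightarrow> pd 0 (\<lambda>y. A (y 0)) x = A'"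
  by (rule pd_eqI) (use DERIV_shift[of A A' 0 "x 0"] in \<open>simp add: add.commute\<close>)

locale multiply_warped_product =
  fixes m :: nat and s :: "nat \<Rightarrow> nat" and U :: "nat \<Rightarrow> (nat \<Rightarrow> real) set"
    and g :: "nat \<Rightarrow> metric" and p :: "nat \<Rightarrow> real" and \<phi> H H' :: "real \<Rightarrow> real"
  assumes fibre_riem: "l < m \<Longrightarrow> riem_metric (s l) (U l) (g l)"
    and warp_pos: "t > 0 \<Longrightarrow> \<phi> t > 0"
    and warp_deriv: "t > 0 \<Longrightarrow> (\<phi> has_real_derivative H t * \<phi> t) (at t)"
    and H_deriv: "t > 0 \<Longrightarrow> (H has_real_derivative H' t) (at t)"
    and warp_powr_smooth: "l < m \<Longrightarrow> smooth_real_on {0<..} (\<lambda>t. \<phi> t powr (2 * p l))"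
begin

abbreviation "n \<equiv> wp_dim m s"
abbreviation "W \<equiv> wp_domain m s U"
abbreviation "fib \<equiv> fib_proj s"
abbreviation "\<zeta> \<equiv> \<Sum>l<m. real (s l) * p l"
abbreviation "\<eta> \<equiv> \<Sum>l<m. real (s l) * (p l)\<^sup>2"

definition "G = wp_metric m s g \<phi> p"
definition "T l t = \<phi> t powr (2 * p l)"
definition "ginv l y = inv_metric (s l) (g l) y"
definition "Ginv = wp_metric m s ginv (\<lambda>t. inverse (\<phi> t)) p"

abbreviation "\<Gamma> \<equiv> christoffel n G"
abbreviation "\<Gamma>F l \<equiv> christoffel (s l) (g l)"

lemma T_pos: "t > 0 \<Longrightarrow> T l t > 0"
  unfolding T_def using warp_pos[of t] by simp

lemma DERIV_T:
  assumes "t > 0"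
  shows "(T l has_real_derivative 2 * p l * H t * T l t) (at t)"
proof -
  have "(T l has_real_derivative 2 * p l * \<phi> t powr (2 * p l - of_nat 1) * (H t * \<phi> t)) (at t)"
    unfolding T_def by (rule DERIV_fun_powr[OF warp_deriv[OF assms] warp_pos[OF assms]])
  also have "2 * p l * \<phi> t powr (2 * p l - of_nat 1) * (H t * \<phi> t) =
      2 * p l * H t * (\<phi> t * \<phi> t powr (2 * p l - 1))"
    by simp
  also have "\<phi> t * \<phi> t powr (2 * p l - 1) = T l t"
    using warp_pos[OF assms] by (simp add: T_def powr_mult_base)
  finally show ?thesis .
qed

lemma fibre_semi_riem: "l < m \<Longrightarrow> semi_riem_metric (s l) (U l) (g l)"
  using fibre_riem by (auto simp: riem_metric_def)

lemma fibre_sym: "l < m \<Longrightarrow> y \<in> U l \<Longrightarrow> g l y i j = g l y j i"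
  using fibre_semi_riem by (auto simp: semi_riem_metric_def)

lemma fibre_is_inverse_mat: assumes "l < m" "y \<in> U l" shows "is_inverse_mat (s l) (g l y) (ginv l y)"
proof -
  obtain B where B: "is_inverse_mat (s l) (g l y) B"
    using fibre_semi_riem[OF assms(1)] assms(2) by (auto simp: semi_riem_metric_def)
  have "ginv l y = B" unfolding ginv_def inv_metric_def
    by (rule the_is_inverse_mat[OF _ B]) (use fibre_sym assms in auto)
  then show ?thesis using B by simp
qed

lemma ginv_left: "l < m \<Longrightarrow> y \<in> U l \<Longrightarrow> i < s l \<Longrightarrow> j < s l \<Longrightarrow>
   (\<Sum>k<s l. ginv l y i k * g l y k j) = (if i = j then 1 else 0)"
  by (rule is_inverse_mat_left[OF _ fibre_is_inverse_mat]) (auto simp: fibre_sym)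

lemma ginv_right: "l < m \<Longrightarrow> y \<in> U l \<Longrightarrow> i < s l \<Longrightarrow> j < s l \<Longrightarrow>
   (\<Sum>k<s l. g l y i k * ginv l y k j) = (if i = j then 1 else 0)"
  using fibre_is_inverse_mat by (auto simp: is_inverse_mat_def)

lemma fibre_smooth: "l < m \<Longrightarrow> i < s l \<Longrightarrow> j < s l \<Longrightarrow> smooth_on (s l) (U l) (\<lambda>y. g l y i j)"
  using fibre_semi_riem by (auto simp: semi_riem_metric_def)

lemma fibre_DERIV:
  assumes "l < m" "y \<in> U l" "c < s l" "i < s l" "j < s l"
  shows "DERIV (\<lambda>h. g l (y(c := y c + h)) i j) 0 :> pd c (\<lambda>z. g l z i j) y"
proof (rule pd_DERIV)
  show "(\<lambda>h. g l (y(c := y c + h)) i j) differentiable (at 0)"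
    using fibre_smooth[OF assms(1,4,5)] assms(2,3) unfolding smooth_on_def
    by (auto dest!: spec[of _ "[]"])
qed

lemma W_pos: "x \<in> W \<Longrightarrow> x 0 > 0"
  by (simp add: wp_domain_def)

lemma W_fib: "x \<in> W \<Longrightarrow> l < m \<Longrightarrow> fib l x \<in> U l"
  by (simp add: wp_domain_def)

lemma continuous_on_fib: "continuous_on S (fib l)"
proof (intro continuous_on_coordinatewise_then_product)
  fix k show "continuous_on S (\<lambda>y. fib l y k)"
    by (cases "k < s l")
       (auto simp: fib_proj_def intro!: continuous_intros
         continuous_on_product_then_coordinatewise[OF continuous_on_id])
qed

lemma W_open: "openin (top_of_set (coord_space n)) W"
proof -
  have "\<forall>l. \<exists>V. l < m \<longrightarrow> open V \<and> U l = coord_space (s l) \<inter> V"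
    using fibre_semi_riem by (auto simp: semi_riem_metric_def openin_open)
  then obtain V where V: "\<And>l. l < m \<Longrightarrow> open (V l) \<and> U l = coord_space (s l) \<inter> V l"
    by metis
  let ?O = "{y. y 0 > 0} \<inter> (\<Inter>l\<in>{..<m}. fib l -` V l)"
  have "open {y::nat\<Rightarrow>real. y 0 > 0}"
    using open_vimage[OF open_greaterThan continuous_on_product_coordinates, of 0 0]
    by (simp add: vimage_def greaterThan_def)
  moreover have "open (\<Inter>l\<in>{..<m}. fib l -` V l)"
    using V by (intro open_INT) (auto intro!: open_vimage continuous_on_fib)
  ultimately have "open ?O" by auto
  moreover have "fib l y \<in> coord_space (s l)" for l y
    by (simp add: fib_proj_def coord_space_def)
  then have "W = coord_space n \<inter> ?O"
    using V by (auto simp: wp_domain_def)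
  ultimately show ?thesis by (auto simp: openin_open)
qed

lemma pd_cong_W: "x \<in> W \<Longrightarrow> k < n \<Longrightarrow> (\<And>y. y \<in> W \<Longrightarrow> f y = f' y) \<Longrightarrow> pd k f x = pd k f' x"
  by (rule pd_cong[OF W_open])

lemma pd_zero_on_W: "x \<in> W \<Longrightarrow> k < n \<Longrightarrow> (\<And>y. y \<in> W \<Longrightarrow> f y = 0) \<Longrightarrow> pd k f x = 0"
  using pd_cong_W[of x k f "\<lambda>y. 0"] by simp

lemma G_tt: "G x 0 0 = -1" by (simp add: G_def wp_metric_tt)
lemma G_tf: "G x 0 (off s l + c) = 0" by (simp add: G_def wp_metric_tf)
lemma G_ft: "G x (off s l + c) 0 = 0" by (simp add: G_def wp_metric_ft)
lemma G_ff: "l < m \<Longrightarrow> c < s l \<Longrightarrow> d < s l' \<Longrightarrow>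
  G x (off s l + c) (off s l' + d) = (if l = l' then T l (x 0) * g l (fib l x) c d else 0)"
  by (simp add: G_def wp_metric_ff T_def)
lemma G_ff_ne: "l < m \<Longrightarrow> c < s l \<Longrightarrow> d < s l' \<Longrightarrow> l \<noteq> l' \<Longrightarrow>
  G x (off s l + c) (off s l' + d) = 0"
  by (simp add: G_ff)

lemma G_outside: "i \<ge> n \<or> j \<ge> n \<Longrightarrow> G x i j = 0"
  by (simp add: G_def wp_metric_outside)

lemma Ginv_tt: "Ginv x 0 0 = -1" by (simp add: Ginv_def wp_metric_tt)
lemma Ginv_tf: "Ginv x 0 (off s l + c) = 0" by (simp add: Ginv_def wp_metric_tf)
lemma Ginv_ft: "Ginv x (off s l + c) 0 = 0" by (simp add: Ginv_def wp_metric_ft)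
lemma Ginv_ff: "l < m \<Longrightarrow> c < s l \<Longrightarrow> d < s l' \<Longrightarrow>
  Ginv x (off s l + c) (off s l' + d) = (if l = l' then ginv l (fib l x) c d / T l (x 0) else 0)"
  by (simp add: Ginv_def wp_metric_ff T_def inverse_powr divide_inverse mult.commute)

lemma Ginv_outside: "i \<ge> n \<or> j \<ge> n \<Longrightarrow> Ginv x i j = 0"
  by (simp add: Ginv_def wp_metric_outside)

lemma G_sym: assumes x: "x \<in> W" shows "G x i j = G x j i"
proof (cases "i < n \<and> j < n")
  case True
  then have i: "i < n" and j: "j < n" by auto
  show ?thesis
  proof (cases rule: wp_index_cases[OF i])
    case 1
    then show ?thesis by (cases rule: wp_index_cases[OF j]) (auto simp: G_tt G_tf G_ft)
  next
    case (2 l c)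
    then show ?thesis
      by (cases rule: wp_index_cases[OF j])
         (auto simp: G_ft G_tf G_ff W_fib[OF x] fibre_sym)
  qed
next
  case False then show ?thesis by (auto simp: G_outside)
qed

lemma G_Ginv_ff:
  assumes x: "x \<in> W" and l: "l < m" "c < s l" and l': "l' < m" "d < s l'"
  shows "(\<Sum>k<n. G x (off s l + c) k * Ginv x k (off s l' + d)) =
         (if off s l + c = off s l' + d then 1 else 0)"
proof -
  have "(\<Sum>k<n. G x (off s l + c) k * Ginv x k (off s l' + d)) =
      (\<Sum>l2<m. \<Sum>e<s l2. G x (off s l + c) (off s l2 + e) * Ginv x (off s l2 + e) (off s l' + d))"
    by (simp add: sum_wp_dim_split G_ft)
  also have "\<dots> = (\<Sum>e<s l. G x (off s l + c) (off s l + e) * Ginv x (off s l + e) (off s l' + d))"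
    by (rule sum_blocks_single) (use l in \<open>auto simp: G_ff_ne\<close>)
  also have "\<dots> = (\<Sum>e<s l. T l (x 0) * g l (fib l x) c e *
                    (if l = l' then ginv l (fib l x) e d / T l (x 0) else 0))"
    using l l' by (intro sum.cong refl) (auto simp: G_ff Ginv_ff)
  also have "\<dots> = (if off s l + c = off s l' + d then 1 else 0)"
  proof (cases "l = l'")
    case True
    have "(\<Sum>e<s l. T l (x 0) * g l (fib l x) c e * (ginv l (fib l x) e d / T l (x 0))) =
          (\<Sum>e<s l. g l (fib l x) c e * ginv l (fib l x) e d)"
      using T_pos[OF W_pos[OF x], of l] by (intro sum.cong refl) simp
    also have "\<dots> = (if c = d then 1 else 0)"
      using ginv_right[OF l(1) W_fib[OF x l(1)] l(2), of d] l' True by simp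
    finally show ?thesis using True by simp
  next
    case False
    then have "off s l + c \<noteq> off s l' + d" using off_add_inj[where s=s and l=l and l'=l' and c=c and d=d] l l' by blast
    then show ?thesis using False by simp
  qed
  finally show ?thesis .
qed

lemma is_inverse_mat_G: assumes x: "x \<in> W" shows "is_inverse_mat n (G x) (Ginv x)"
  unfolding is_inverse_mat_def
proof (intro conjI allI impI)
  fix i j assume i: "i < n" and j: "j < n"
  show "(\<Sum>k<n. G x i k * Ginv x k j) = (if i = j then 1 else 0)"
  proof (cases rule: wp_index_cases[OF i])
    case 1
    then show ?thesis
      by (cases rule: wp_index_cases[OF j]) (auto simp: sum_wp_dim_split G_tt G_tf Ginv_tt Ginv_tf Ginv_ft)
  next
    case (2 l c)
    show ?thesis
    proof (cases rule: wp_index_cases[OF j])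
      case 1
      then show ?thesis using 2 by (simp add: sum_wp_dim_split G_ft Ginv_ft)
    next
      case (2 l' d)
      then show ?thesis using G_Ginv_ff[OF x \<open>l < m\<close> \<open>c < s l\<close>] \<open>i = off s l + c\<close> by simp
    qed
  qed
qed (rule Ginv_outside)

lemma inv_metric_G: "x \<in> W \<Longrightarrow> inv_metric n G x = Ginv x"
  unfolding inv_metric_def by (rule the_is_inverse_mat[OF _ is_inverse_mat_G]) (simp_all add: G_sym)

lemma pd_G_tt: "pd k (\<lambda>y. G y 0 0) x = 0" by (simp add: G_tt)
lemma pd_G_tf: "pd k (\<lambda>y. G y 0 (off s l + c)) x = 0" by (simp add: G_tf)
lemma pd_G_ft: "pd k (\<lambda>y. G y (off s l + c) 0) x = 0" by (simp add: G_ft)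
lemma pd_G_ff_ne: "l < m \<Longrightarrow> c < s l \<Longrightarrow> d < s l' \<Longrightarrow> l \<noteq> l' \<Longrightarrow>
   pd k (\<lambda>y. G y (off s l + c) (off s l' + d)) x = 0"
  by (simp add: G_ff_ne)
lemma pd_G_Lt: "J < n \<Longrightarrow> pd k (\<lambda>y. G y J 0) x = 0"
  by (cases rule: wp_index_cases) (auto simp: pd_G_tt pd_G_ft)

lemma pd_time_G_ff:
  assumes x: "x \<in> W" and l: "l < m" "c < s l" "d < s l"
  shows "pd 0 (\<lambda>y. G y (off s l + c) (off s l + d)) x = 2 * p l * H (x 0) * T l (x 0) * g l (fib l x) c d"
proof -
  have "pd 0 (\<lambda>y. G y (off s l + c) (off s l + d)) x = pd 0 (\<lambda>y. T l (y 0) * g l (fib l y) c d) x"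
    by (rule pd_cong_W[OF x]) (auto simp: wp_dim_pos G_ff l)
  also have "\<dots> = 2 * p l * H (x 0) * T l (x 0) * g l (fib l x) c d"
    by (rule pd_eqI, rule DERIV_time_line_product[where A="T l" and B="\<lambda>z. g l z c d" and s=s and l=l])
       (rule DERIV_T[OF W_pos[OF x]])
  finally show ?thesis .
qed

lemma pd_fibre_G_ff:
  assumes x: "x \<in> W" and l: "l < m" "c < s l" "d < s l" "e < s l"
  shows "pd (off s l + e) (\<lambda>y. G y (off s l + c) (off s l + d)) x =
    T l (x 0) * pd e (\<lambda>z. g l z c d) (fib l x)"
proof -
  have "pd (off s l + e) (\<lambda>y. G y (off s l + c) (off s l + d)) x =
      pd (off s l + e) (\<lambda>y. T l (y 0) * g l (fib l y) c d) x"
    by (rule pd_cong_W[OF x]) (auto simp: off_add_lt_wp_dim G_ff l)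
  also have "\<dots> = T l (x 0) * pd e (\<lambda>z. g l z c d) (fib l x)"
    by (rule pd_eqI, rule DERIV_fibre_line_product[where A="T l" and B="\<lambda>z. g l z c d" and s=s and l=l and c=e, OF l(4)])
       (rule fibre_DERIV[OF l(1) W_fib[OF x l(1)] l(4,2,3)])
  finally show ?thesis .
qed

lemma pd_other_fibre_G_ff:
  assumes x: "x \<in> W" and l: "l < m" "c < s l" "d < s l" "l' < m" "e < s l'" "l \<noteq> l'"
  shows "pd (off s l' + e) (\<lambda>y. G y (off s l + c) (off s l + d)) x = 0"
proof -
  have "pd (off s l' + e) (\<lambda>y. G y (off s l + c) (off s l + d)) x =
      pd (off s l' + e) (\<lambda>y. T l (y 0) * g l (fib l y) c d) x"
    by (rule pd_cong_W[OF x]) (auto simp: off_add_lt_wp_dim G_ff l)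
  also have "\<dots> = 0"
    by (rule pd_eqI, rule DERIV_other_fibre_line_product[where s=s and l=l and l'=l' and c=e, OF l(6,5)])
  finally show ?thesis .
qed

subsection \<open>Christoffel symbols\<close>

lemma chr_eq: "x \<in> W \<Longrightarrow> \<Gamma> K I J x = 1/2 * (\<Sum>L<n. Ginv x K L *
   (pd I (\<lambda>y. G y J L) x + pd J (\<lambda>y. G y I L) x - pd L (\<lambda>y. G y I J) x))"
  by (simp add: christoffel_def inv_metric_G)

lemma chr_t: "x \<in> W \<Longrightarrow> I < n \<Longrightarrow> J < n \<Longrightarrow> \<Gamma> 0 I J x = 1/2 * pd 0 (\<lambda>y. G y I J) x"
  by (simp add: chr_eq sum_wp_dim_split Ginv_tt Ginv_tf pd_G_Lt)

lemma chr_f: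
  assumes x: "x \<in> W" and l: "l < m" "c < s l"
  shows "\<Gamma> (off s l + c) I J x = 1/2 * (\<Sum>d<s l. ginv l (fib l x) c d / T l (x 0) *
   (pd I (\<lambda>y. G y J (off s l + d)) x + pd J (\<lambda>y. G y I (off s l + d)) x
    - pd (off s l + d) (\<lambda>y. G y I J) x))"
proof -
  let ?F = "\<lambda>d. pd I (\<lambda>y. G y J d) x + pd J (\<lambda>y. G y I d) x - pd d (\<lambda>y. G y I J) x"
  have "\<Gamma> (off s l + c) I J x =
      1/2 * (\<Sum>l2<m. \<Sum>d<s l2. Ginv x (off s l + c) (off s l2 + d) * ?F (off s l2 + d))"
    using x by (simp add: chr_eq sum_wp_dim_split Ginv_ft)
  also have "(\<Sum>l2<m. \<Sum>d<s l2. Ginv x (off s l + c) (off s l2 + d) * ?F (off s l2 + d)) =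
      (\<Sum>d<s l. Ginv x (off s l + c) (off s l + d) * ?F (off s l + d))"
    by (rule sum_blocks_single) (use l in \<open>auto simp: Ginv_ff\<close>)
  also have "\<dots> = (\<Sum>d<s l. ginv l (fib l x) c d / T l (x 0) * ?F (off s l + d))"
    using l by (intro sum.cong refl) (auto simp: Ginv_ff)
  finally show ?thesis .
qed

lemma chr_ttt: "x \<in> W \<Longrightarrow> \<Gamma> 0 0 0 x = 0"
  by (simp add: chr_t wp_dim_pos pd_G_tt)

lemma chr_ttf: "x \<in> W \<Longrightarrow> l < m \<Longrightarrow> c < s l \<Longrightarrow> \<Gamma> 0 0 (off s l + c) x = 0"
  by (simp add: chr_t wp_dim_pos pd_G_tf off_add_lt_wp_dim)

lemma chr_tft: "x \<in> W \<Longrightarrow> l < m \<Longrightarrow> c < s l \<Longrightarrow> \<Gamma> 0 (off s l + c) 0 x = 0"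
  by (simp add: chr_t wp_dim_pos pd_G_ft off_add_lt_wp_dim)

lemma chr_tff: "x \<in> W \<Longrightarrow> l < m \<Longrightarrow> c < s l \<Longrightarrow> l' < m \<Longrightarrow> d < s l' \<Longrightarrow>
   \<Gamma> 0 (off s l + c) (off s l' + d) x =
     (if l = l' then p l * H (x 0) * T l (x 0) * g l (fib l x) c d else 0)"
  by (cases "l = l'") (simp_all add: chr_t off_add_lt_wp_dim pd_time_G_ff pd_G_ff_ne)

lemma chr_ftt: "x \<in> W \<Longrightarrow> l < m \<Longrightarrow> c < s l \<Longrightarrow> \<Gamma> (off s l + c) 0 0 x = 0"
  by (simp add: chr_f pd_G_tf pd_G_ft pd_G_tt)

lemma chr_ftf:
  assumes x: "x \<in> W" and l: "l < m" "c < s l" "l' < m" "d' < s l'"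
  shows "\<Gamma> (off s l + c) 0 (off s l' + d') x = (if l = l' \<and> c = d' then p l * H (x 0) else 0)"
proof (cases "l = l'")
  case True
  have "\<Gamma> (off s l + c) 0 (off s l' + d') x = 1/2 * (\<Sum>d<s l. ginv l (fib l x) c d / T l (x 0) *
      (2 * p l * H (x 0) * T l (x 0) * g l (fib l x) d' d))"
    using True l x by (simp add: chr_f pd_G_tf pd_time_G_ff)
  also have "\<dots> = p l * H (x 0) * (\<Sum>d<s l. ginv l (fib l x) c d * g l (fib l x) d d')"
    using T_pos[OF W_pos[OF x], of l] W_fib[OF x l(1)] l
    by (simp add: sum_distrib_left fibre_sym[of l _ d'] mult_ac)
  also have "\<dots> = (if l = l' \<and> c = d' then p l * H (x 0) else 0)"
    using ginv_left[OF l(1) W_fib[OF x l(1)] l(2), of d'] True l by simp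
  finally show ?thesis .
next
  case False
  then show ?thesis using l x by (simp add: chr_f pd_G_tf pd_G_ff_ne pd_G_ft)
qed

lemma chr_fft:
  assumes x: "x \<in> W" and l: "l < m" "c < s l" "l' < m" "d' < s l'"
  shows "\<Gamma> (off s l + c) (off s l' + d') 0 x = (if l = l' \<and> c = d' then p l * H (x 0) else 0)"
proof -
  have "\<Gamma> (off s l + c) (off s l' + d') 0 x = \<Gamma> (off s l + c) 0 (off s l' + d') x"
    by (simp only: chr_f[OF x l(1,2)]) (simp add: pd_G_tf pd_G_ft)
  then show ?thesis using chr_ftf[OF assms] by simp
qed

lemma chr_fff:
  assumes x: "x \<in> W" and l: "l < m" "c < s l" "l1 < m" "d1 < s l1" "l2 < m" "d2 < s l2"
  shows "\<Gamma> (off s l + c) (off s l1 + d1) (off s l2 + d2) x =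
    (if l1 = l \<and> l2 = l then \<Gamma>F l c d1 d2 (fib l x) else 0)"
proof (cases "l1 = l \<and> l2 = l")
  case True
  have "\<Gamma> (off s l + c) (off s l1 + d1) (off s l2 + d2) x =
     1/2 * (\<Sum>d<s l. ginv l (fib l x) c d / T l (x 0) * (T l (x 0) * pd d1 (\<lambda>z. g l z d2 d) (fib l x)
        + T l (x 0) * pd d2 (\<lambda>z. g l z d1 d) (fib l x) - T l (x 0) * pd d (\<lambda>z. g l z d1 d2) (fib l x)))"
    using True l x by (simp add: chr_f pd_fibre_G_ff)
  also have "\<dots> = 1/2 * (\<Sum>d<s l. ginv l (fib l x) c d * (pd d1 (\<lambda>z. g l z d2 d) (fib l x)
        + pd d2 (\<lambda>z. g l z d1 d) (fib l x) - pd d (\<lambda>z. g l z d1 d2) (fib l x)))"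
    using T_pos[OF W_pos[OF x], of l]
    by (intro arg_cong[where f="\<lambda>u. 1/2 * u"] sum.cong refl) (simp add: field_simps)
  also have "\<dots> = \<Gamma>F l c d1 d2 (fib l x)"
    by (simp add: christoffel_def ginv_def)
  finally show ?thesis using True by simp
next
  case False
  have pd_G_off_block: "pd (off s la + da) (\<lambda>y. G y (off s lb + db) (off s l' + d)) x = 0"
    if "l' < m" "d < s l'" "la < m" "da < s la" "lb < m" "db < s lb" "\<not> (la = l' \<and> lb = l')"
    for d la da lb db l'
  proof (cases "lb = l'")
    case True
    then show ?thesis using pd_other_fibre_G_ff[OF x] that by auto
  next
    case False
    then show ?thesis using that by (intro pd_G_ff_ne) auto
  qed
  have "pd (off s l1 + d1) (\<lambda>y. G y (off s l2 + d2) (off s l + d)) x = 0"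
    "pd (off s l2 + d2) (\<lambda>y. G y (off s l1 + d1) (off s l + d)) x = 0"
    "pd (off s l + d) (\<lambda>y. G y (off s l1 + d1) (off s l2 + d2)) x = 0" if "d < s l" for d
    using pd_G_off_block[of l d] pd_G_off_block[of l2 d2 l d l1 d1] False l that
    by (auto simp: pd_G_ff_ne)
  then show ?thesis using False l x by (auto simp: chr_f)
qed

lemma chr_Ltt: "x \<in> W \<Longrightarrow> L < n \<Longrightarrow> \<Gamma> L 0 0 x = 0"
  by (auto elim: wp_index_cases simp: chr_ttt chr_ftt)

lemma chr_ttL: "x \<in> W \<Longrightarrow> L < n \<Longrightarrow> \<Gamma> 0 0 L x = 0"
  by (auto elim: wp_index_cases simp: chr_ttt chr_ttf)

subsection \<open>Ricci tensor\<close>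

lemma pd_chr_Ltt: "x \<in> W \<Longrightarrow> k < n \<Longrightarrow> L < n \<Longrightarrow> pd k (\<Gamma> L 0 0) x = 0"
  by (rule pd_zero_on_W) (auto elim: wp_index_cases simp: chr_ttt chr_ftt)

lemma pd_chr_ttf:
  "x \<in> W \<Longrightarrow> k < n \<Longrightarrow> l < m \<Longrightarrow> c < s l \<Longrightarrow> pd k (\<Gamma> 0 0 (off s l + c)) x = 0"
  by (rule pd_zero_on_W) (auto simp: chr_ttf)

lemma pd_chr_tft:
  "x \<in> W \<Longrightarrow> k < n \<Longrightarrow> l < m \<Longrightarrow> c < s l \<Longrightarrow> pd k (\<Gamma> 0 (off s l + c) 0) x = 0"
  by (rule pd_zero_on_W) (auto simp: chr_tft)

lemma pd_chr_tff_ne: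
  "x \<in> W \<Longrightarrow> k < n \<Longrightarrow> l < m \<Longrightarrow> c < s l \<Longrightarrow> l' < m \<Longrightarrow> d < s l' \<Longrightarrow> l \<noteq> l' \<Longrightarrow>
   pd k (\<Gamma> 0 (off s l + c) (off s l' + d)) x = 0"
  by (rule pd_zero_on_W) (auto simp: chr_tff)

lemma pd_time_chr_tff:
  assumes x: "x \<in> W" and l: "l < m" "c < s l" "d < s l"
  shows "pd 0 (\<Gamma> 0 (off s l + c) (off s l + d)) x =
     p l * (H' (x 0) + 2 * p l * (H (x 0))\<^sup>2) * T l (x 0) * g l (fib l x) c d"
proof -
  have "pd 0 (\<Gamma> 0 (off s l + c) (off s l + d)) x =
      pd 0 (\<lambda>y. p l * H (y 0) * T l (y 0) * g l (fib l y) c d) x"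
    by (rule pd_cong_W[OF x]) (use l wp_dim_pos in \<open>auto simp: chr_tff\<close>)
  also have "\<dots> = (p l * (H' (x 0) * T l (x 0) + H (x 0) * (2 * p l * H (x 0) * T l (x 0)))) *
      g l (fib l x) c d"
    by (rule pd_eqI, rule DERIV_time_line_product[where A="\<lambda>t. p l * H t * T l t"
          and B="\<lambda>z. g l z c d" and s=s and l=l])
       (use W_pos[OF x] in \<open>auto intro!: derivative_eq_intros H_deriv DERIV_T simp: algebra_simps\<close>)
  also have "\<dots> = p l * (H' (x 0) + 2 * p l * (H (x 0))\<^sup>2) * T l (x 0) * g l (fib l x) c d"
    by (simp add: algebra_simps power2_eq_square)
  finally show ?thesis .
qed

lemma pd_fibre_chr_ftf:
  assumes x: "x \<in> W" and l: "l < m" "c < s l" "l2 < m" "d < s l2" "l' < m" "e < s l'"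
  shows "pd (off s l' + e) (\<Gamma> (off s l + c) 0 (off s l2 + d)) x = 0"
proof -
  have "pd (off s l' + e) (\<Gamma> (off s l + c) 0 (off s l2 + d)) x =
      pd (off s l' + e) (\<lambda>y. (\<lambda>t. if l = l2 \<and> c = d then p l * H t else 0) (y 0)) x"
    by (rule pd_cong_W[OF x]) (use l in \<open>auto simp: chr_ftf off_add_lt_wp_dim\<close>)
  then show ?thesis
    using pd_time_fun_fibre[of s l' e "\<lambda>t. if l = l2 \<and> c = d then p l * H t else 0" x] by simp
qed

lemma pd_fibre_chr_fft:
  assumes x: "x \<in> W" and l: "l < m" "c < s l" "l2 < m" "d < s l2" "l' < m" "e < s l'"
  shows "pd (off s l' + e) (\<Gamma> (off s l + c) (off s l2 + d) 0) x = 0"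
proof -
  have "pd (off s l' + e) (\<Gamma> (off s l + c) (off s l2 + d) 0) x =
      pd (off s l' + e) (\<lambda>y. (\<lambda>t. if l = l2 \<and> c = d then p l * H t else 0) (y 0)) x"
    by (rule pd_cong_W[OF x]) (use l in \<open>auto simp: chr_fft off_add_lt_wp_dim\<close>)
  then show ?thesis
    using pd_time_fun_fibre[of s l' e "\<lambda>t. if l = l2 \<and> c = d then p l * H t else 0" x] by simp
qed

lemma pd_time_chr_ftf:
  assumes x: "x \<in> W" and l: "l < m" "c < s l"
  shows "pd 0 (\<Gamma> (off s l + c) 0 (off s l + c)) x = p l * H' (x 0)"
proof -
  have "pd 0 (\<Gamma> (off s l + c) 0 (off s l + c)) x = pd 0 (\<lambda>y. (\<lambda>t. p l * H t) (y 0)) x"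
    by (rule pd_cong_W[OF x]) (use l wp_dim_pos in \<open>auto simp: chr_ftf\<close>)
  also have "\<dots> = p l * H' (x 0)"
    by (rule pd_time_fun_time) (use W_pos[OF x] in \<open>auto intro!: derivative_eq_intros H_deriv\<close>)
  finally show ?thesis .
qed

lemma pd_chr_fff_ne:
  assumes x: "x \<in> W" "k < n" and l: "l < m" "c < s l" "l1 < m" "d1 < s l1" "l2 < m" "d2 < s l2"
    and ne: "\<not> (l1 = l \<and> l2 = l)"
  shows "pd k (\<Gamma> (off s l + c) (off s l1 + d1) (off s l2 + d2)) x = 0"
  by (rule pd_zero_on_W[OF x]) (use l ne in \<open>auto simp: chr_fff\<close>)

lemma pd_chr_fff_fibre:
  assumes x: "x \<in> W" "k < n" and l: "l < m" "c < s l" "d1 < s l" "d2 < s l"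
  shows "pd k (\<Gamma> (off s l + c) (off s l + d1) (off s l + d2)) x = pd k (\<lambda>y. \<Gamma>F l c d1 d2 (fib l y)) x"
  by (rule pd_cong_W[OF x]) (use l in \<open>auto simp: chr_fff\<close>)

lemma pd_time_chr_fff:
  assumes x: "x \<in> W" and l: "l < m" "c < s l" "l1 < m" "d1 < s l1" "l2 < m" "d2 < s l2"
  shows "pd 0 (\<Gamma> (off s l + c) (off s l1 + d1) (off s l2 + d2)) x = 0"
proof (cases "l1 = l \<and> l2 = l")
  case True
  then show ?thesis using pd_chr_fff_fibre[OF x wp_dim_pos] l by (auto simp: pd_fib_proj_time)
next
  case False
  then show ?thesis using pd_chr_fff_ne[OF x wp_dim_pos l] by auto
qed

lemma pd_fibre_chr_fff:
  assumes x: "x \<in> W" and l: "l < m" "c < s l" "d1 < s l" "d2 < s l" "e < s l"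
  shows "pd (off s l + e) (\<Gamma> (off s l + c) (off s l + d1) (off s l + d2)) x =
    pd e (\<Gamma>F l c d1 d2) (fib l x)"
  using pd_chr_fff_fibre[OF x off_add_lt_wp_dim[where s=s and m=m, OF l(1,5)] l(1-4)] by (simp add: pd_fib_proj_same l)

lemma pd_other_fibre_chr_fff:
  assumes x: "x \<in> W" and l: "l < m" "c < s l" "l1 < m" "d1 < s l1" "l2 < m" "d2 < s l2"
    "l' < m" "e < s l'" "l' \<noteq> l"
  shows "pd (off s l' + e) (\<Gamma> (off s l + c) (off s l1 + d1) (off s l2 + d2)) x = 0"
proof (cases "l1 = l \<and> l2 = l")
  case True
  then show ?thesis
    using pd_chr_fff_fibre[OF x off_add_lt_wp_dim[where s=s and m=m, OF l(7,8)]] l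
    by (auto simp: pd_fib_proj_other)
next
  case False
  then show ?thesis using pd_chr_fff_ne[OF x off_add_lt_wp_dim[where s=s and m=m, OF l(7,8)] l(1-6)] by auto
qed

lemma christoffel_fibre_sym:
  assumes l: "l < m" and z: "z \<in> U l"
  shows "\<Gamma>F l c i j z = \<Gamma>F l c j i z"
proof -
  have op: "openin (top_of_set (coord_space (s l))) (U l)"
    using fibre_semi_riem[OF l] by (simp add: semi_riem_metric_def)
  have "pd L (\<lambda>y. g l y i j) z = pd L (\<lambda>y. g l y j i) z" if "L < s l" for L
    by (rule pd_cong[OF op z that]) (rule fibre_sym[OF l])
  then show ?thesis unfolding christoffel_def
    by (intro arg_cong[where f="\<lambda>u. 1/2 * u"] sum.cong refl) auto
qed

lemma sum_mult_chr_Ltt: "x \<in> W \<Longrightarrow> (\<Sum>L<n. F L * \<Gamma> L 0 0 x) = 0"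
  by (simp add: chr_Ltt)

lemma sum_mult_chr_Ltf:
  assumes x: "x \<in> W" and l: "l < m" "d < s l"
  shows "(\<Sum>L<n. F L * \<Gamma> L 0 (off s l + d) x) = F (off s l + d) * (p l * H (x 0))"
proof -
  have "(\<Sum>L<n. F L * \<Gamma> L 0 (off s l + d) x) =
      (\<Sum>l'<m. \<Sum>e<s l'. F (off s l' + e) * \<Gamma> (off s l' + e) 0 (off s l + d) x)"
    using x l by (simp add: sum_wp_dim_split chr_ttf)
  also have "\<dots> = F (off s l + d) * \<Gamma> (off s l + d) 0 (off s l + d) x"
    by (rule sum_blocks_point[where s=s and m=m, OF l]) (use x l in \<open>auto simp: chr_ftf\<close>)
  finally show ?thesis using x l by (simp add: chr_ftf)
qed

lemma sum_mult_chr_Lft: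
  assumes x: "x \<in> W" and l: "l < m" "d < s l"
  shows "(\<Sum>L<n. F L * \<Gamma> L (off s l + d) 0 x) = F (off s l + d) * (p l * H (x 0))"
proof -
  have "(\<Sum>L<n. F L * \<Gamma> L (off s l + d) 0 x) =
      (\<Sum>l'<m. \<Sum>e<s l'. F (off s l' + e) * \<Gamma> (off s l' + e) (off s l + d) 0 x)"
    using x l by (simp add: sum_wp_dim_split chr_tft)
  also have "\<dots> = F (off s l + d) * \<Gamma> (off s l + d) (off s l + d) 0 x"
    by (rule sum_blocks_point[where s=s and m=m, OF l]) (use x l in \<open>auto simp: chr_fft\<close>)
  finally show ?thesis using x l by (simp add: chr_fft)
qed

lemma sum_chr_ftL_mult:
  assumes x: "x \<in> W" and l: "l < m" "d < s l"
  shows "(\<Sum>L<n. \<Gamma> (off s l + d) 0 L x * F L) = (p l * H (x 0)) * F (off s l + d)"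
proof -
  have "(\<Sum>L<n. \<Gamma> (off s l + d) 0 L x * F L) =
      (\<Sum>l'<m. \<Sum>e<s l'. \<Gamma> (off s l + d) 0 (off s l' + e) x * F (off s l' + e))"
    using x l by (simp add: sum_wp_dim_split chr_ftt)
  also have "\<dots> = \<Gamma> (off s l + d) 0 (off s l + d) x * F (off s l + d)"
    by (rule sum_blocks_point[where s=s and m=m, OF l]) (use x l in \<open>auto simp: chr_ftf\<close>)
  finally show ?thesis using x l by (simp add: chr_ftf)
qed

lemma sum_blocks_zeta: "(\<Sum>l<m. \<Sum>c<s l. p l * K) = \<zeta> * K"
  by (simp add: sum_distrib_right sum_distrib_left mult_ac)

lemma sum_blocks_eta: "(\<Sum>l<m. \<Sum>c<s l. (p l)\<^sup>2 * K) = \<eta> * K"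
  by (simp add: sum_distrib_right sum_distrib_left mult_ac)

lemma chr_trace_t: "x \<in> W \<Longrightarrow> (\<Sum>k<n. \<Gamma> k k 0 x) = \<zeta> * H (x 0)"
  by (simp add: sum_wp_dim_split chr_ttt chr_fft flip: sum_blocks_zeta)

lemma chr_trace_f:
  assumes x: "x \<in> W" and l: "l < m" "d < s l"
  shows "(\<Sum>k<n. \<Gamma> k k (off s l + d) x) = (\<Sum>e<s l. \<Gamma>F l e e d (fib l x))"
proof -
  have "(\<Sum>k<n. \<Gamma> k k (off s l + d) x) =
      (\<Sum>l'<m. \<Sum>e<s l'. \<Gamma> (off s l' + e) (off s l' + e) (off s l + d) x)"
    using x l by (simp add: sum_wp_dim_split chr_ttf)
  also have "\<dots> = (\<Sum>e<s l. \<Gamma> (off s l + e) (off s l + e) (off s l + d) x)"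
    by (rule sum_blocks_single[OF l(1)]) (use x l in \<open>auto simp: chr_fff\<close>)
  also have "\<dots> = (\<Sum>e<s l. \<Gamma>F l e e d (fib l x))"
    using x l by (intro sum.cong refl) (auto simp: chr_fff)
  finally show ?thesis .
qed

lemma ricci_tt:
  assumes x: "x \<in> W"
  shows "ricci n G x 0 0 = - (\<zeta> * H' (x 0) + \<eta> * (H (x 0))\<^sup>2)"
proof -
  let ?h = "H (x 0)"
  have A: "(\<Sum>k<n. pd k (\<Gamma> k 0 0) x - pd 0 (\<Gamma> k 0 k) x) = - (\<Sum>l<m. \<Sum>c<s l. p l * H' (x 0))"
    using x by (simp add: sum_wp_dim_split pd_chr_Ltt pd_time_chr_ftf wp_dim_pos off_add_lt_wp_dim
        sum_negf)
  have diag: "(\<Sum>L<n. \<Gamma> (off s l + c) 0 L x * \<Gamma> L 0 (off s l + c) x) = (p l)\<^sup>2 * ?h\<^sup>2"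
    if l: "l < m" "c < s l" for l c
  proof -
    have "(\<Sum>L<n. \<Gamma> (off s l + c) 0 L x * \<Gamma> L 0 (off s l + c) x) =
        (\<Sum>l'<m. \<Sum>d<s l'. \<Gamma> (off s l + c) 0 (off s l' + d) x * \<Gamma> (off s l' + d) 0 (off s l + c) x)"
      using x l by (simp add: sum_wp_dim_split chr_ftt)
    also have "\<dots> = \<Gamma> (off s l + c) 0 (off s l + c) x * \<Gamma> (off s l + c) 0 (off s l + c) x"
      by (rule sum_blocks_point[where s=s and m=m, OF l]) (use x l in \<open>auto simp: chr_ftf\<close>)
    also have "\<dots> = (p l)\<^sup>2 * ?h\<^sup>2" using x l by (simp add: chr_ftf power2_eq_square)
    finally show ?thesis .
  qed
  have B: "(\<Sum>k<n. \<Sum>L<n. \<Gamma> k k L x * \<Gamma> L 0 0 x - \<Gamma> k 0 L x * \<Gamma> L 0 k x) =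
      - (\<Sum>l<m. \<Sum>c<s l. (p l)\<^sup>2 * ?h\<^sup>2)"
  proof -
    have "(\<Sum>k<n. \<Sum>L<n. \<Gamma> k k L x * \<Gamma> L 0 0 x - \<Gamma> k 0 L x * \<Gamma> L 0 k x) =
        - (\<Sum>k<n. \<Sum>L<n. \<Gamma> k 0 L x * \<Gamma> L 0 k x)"
      using x by (simp add: chr_Ltt sum_negf)
    also have "(\<Sum>k<n. \<Sum>L<n. \<Gamma> k 0 L x * \<Gamma> L 0 k x) =
        (\<Sum>l<m. \<Sum>c<s l. \<Sum>L<n. \<Gamma> (off s l + c) 0 L x * \<Gamma> L 0 (off s l + c) x)"
      using x by (subst sum_wp_dim_split) (simp add: chr_ttL)
    also have "\<dots> = (\<Sum>l<m. \<Sum>c<s l. (p l)\<^sup>2 * ?h\<^sup>2)"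
      by (intro sum.cong refl) (simp add: diag)
    finally show ?thesis .
  qed
  show ?thesis unfolding ricci_def A B sum_blocks_zeta sum_blocks_eta by simp
qed

lemma ricci_tf:
  assumes x: "x \<in> W" and l: "l < m" "d < s l"
  shows "ricci n G x 0 (off s l + d) = 0"
proof -
  let ?J = "off s l + d" and ?h = "H (x 0)"
  have A: "(\<Sum>k<n. pd k (\<Gamma> k 0 ?J) x - pd ?J (\<Gamma> k 0 k) x) = 0"
    using x l by (simp add: sum_wp_dim_split pd_chr_Ltt pd_chr_ttf pd_fibre_chr_ftf off_add_lt_wp_dim
        wp_dim_pos)
  have B1: "(\<Sum>k<n. \<Sum>L<n. \<Gamma> k k L x * \<Gamma> L 0 ?J x) = (\<Sum>e<s l. \<Gamma>F l e e d (fib l x)) * (p l * ?h)"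
    using x l by (simp add: sum_mult_chr_Ltf chr_trace_f sum_distrib_right[symmetric])
  have B2: "(\<Sum>k<n. \<Sum>L<n. \<Gamma> k ?J L x * \<Gamma> L 0 k x) = (\<Sum>e<s l. \<Gamma>F l e d e (fib l x)) * (p l * ?h)"
  proof -
    have "(\<Sum>k<n. \<Sum>L<n. \<Gamma> k ?J L x * \<Gamma> L 0 k x) =
        (\<Sum>l'<m. \<Sum>e<s l'. \<Gamma> (off s l' + e) ?J (off s l' + e) x * (p l' * ?h))"
      using x by (subst sum_wp_dim_split) (simp add: sum_mult_chr_Ltt sum_mult_chr_Ltf)
    also have "\<dots> = (\<Sum>e<s l. \<Gamma> (off s l + e) ?J (off s l + e) x * (p l * ?h))"
      by (rule sum_blocks_single[OF l(1)]) (use x l in \<open>auto simp: chr_fff\<close>)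
    also have "\<dots> = (\<Sum>e<s l. \<Gamma>F l e d e (fib l x)) * (p l * ?h)"
      using x l by (simp add: chr_fff sum_distrib_right)
    finally show ?thesis .
  qed
  have "(\<Sum>e<s l. \<Gamma>F l e e d (fib l x)) = (\<Sum>e<s l. \<Gamma>F l e d e (fib l x))"
    using christoffel_fibre_sym[OF l(1) W_fib[OF x l(1)]] by simp
  then show ?thesis unfolding ricci_def A by (simp add: sum_subtractf B1 B2)
qed

lemma ricci_ft:
  assumes x: "x \<in> W" and l: "l < m" "c < s l"
  shows "ricci n G x (off s l + c) 0 = 0"
proof -
  let ?I = "off s l + c" and ?h = "H (x 0)"
  have A: "(\<Sum>k<n. pd k (\<Gamma> k ?I 0) x - pd 0 (\<Gamma> k ?I k) x) = 0"
    using x l by (simp add: sum_wp_dim_split pd_chr_tft pd_fibre_chr_fft pd_time_chr_fff off_add_lt_wp_dim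
        wp_dim_pos)
  have B1: "(\<Sum>k<n. \<Sum>L<n. \<Gamma> k k L x * \<Gamma> L ?I 0 x) = (\<Sum>e<s l. \<Gamma>F l e e c (fib l x)) * (p l * ?h)"
    using x l by (simp add: sum_mult_chr_Lft chr_trace_f sum_distrib_right[symmetric])
  have B2: "(\<Sum>k<n. \<Sum>L<n. \<Gamma> k 0 L x * \<Gamma> L ?I k x) = (\<Sum>e<s l. \<Gamma>F l e c e (fib l x)) * (p l * ?h)"
  proof -
    have "(\<Sum>k<n. \<Sum>L<n. \<Gamma> k 0 L x * \<Gamma> L ?I k x) =
        (\<Sum>l'<m. \<Sum>e<s l'. (p l' * ?h) * \<Gamma> (off s l' + e) ?I (off s l' + e) x)"
      using x by (subst sum_wp_dim_split) (simp add: chr_ttL sum_chr_ftL_mult)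
    also have "\<dots> = (\<Sum>e<s l. (p l * ?h) * \<Gamma> (off s l + e) ?I (off s l + e) x)"
      by (rule sum_blocks_single[OF l(1)]) (use x l in \<open>auto simp: chr_fff\<close>)
    also have "\<dots> = (\<Sum>e<s l. \<Gamma>F l e c e (fib l x)) * (p l * ?h)"
      using x l by (simp add: chr_fff sum_distrib_left mult.commute)
    finally show ?thesis .
  qed
  have "(\<Sum>e<s l. \<Gamma>F l e e c (fib l x)) = (\<Sum>e<s l. \<Gamma>F l e c e (fib l x))"
    using christoffel_fibre_sym[OF l(1) W_fib[OF x l(1)]] by simp
  then show ?thesis unfolding ricci_def A by (simp add: sum_subtractf B1 B2)
qed

lemma ricci_ff_ne:
  assumes x: "x \<in> W" and l: "l < m" "c < s l" "l' < m" "d < s l'" "l \<noteq> l'"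
  shows "ricci n G x (off s l + c) (off s l' + d) = 0"
proof -
  let ?I = "off s l + c" and ?J = "off s l' + d"
  have pd_trace: "pd ?J (\<Gamma> (off s l2 + e) ?I (off s l2 + e)) x = 0" if "l2 < m" "e < s l2" for l2 e
  proof (cases "l2 = l")
    case True
    show ?thesis by (rule pd_other_fibre_chr_fff[OF x that l(1,2) that l(3,4)]) (use True l in simp)
  next
    case False
    show ?thesis
      by (rule pd_chr_fff_ne[OF x off_add_lt_wp_dim[where s=s and m=m, OF l(3,4)] that l(1,2) that])
         (use False in simp)
  qed
  have A: "(\<Sum>k<n. pd k (\<Gamma> k ?I ?J) x - pd ?J (\<Gamma> k ?I k) x) = 0"
    using x l by (simp add: sum_wp_dim_split pd_chr_tff_ne pd_chr_tft pd_chr_fff_ne pd_trace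
        off_add_lt_wp_dim wp_dim_pos)
  have Z1: "\<Gamma> L ?I ?J x = 0" if "L < n" for L
    using that x l by (cases rule: wp_index_cases) (auto simp: chr_tff chr_fff)
  have Z2: "\<Gamma> k ?J L x * \<Gamma> L ?I k x = 0" if "k < n" "L < n" for k L
    using that(1)
  proof (cases rule: wp_index_cases)
    case 1
    show ?thesis using that(2)
      by (cases rule: wp_index_cases) (use 1 x l in \<open>auto simp: chr_tft chr_tff chr_fft\<close>)
  next
    case (2 l3 f)
    show ?thesis using that(2)
      by (cases rule: wp_index_cases) (use 2 x l in \<open>auto simp: chr_tft chr_tff chr_fft chr_fff\<close>)
  qed
  have B: "(\<Sum>k<n. \<Sum>L<n. \<Gamma> k k L x * \<Gamma> L ?I ?J x - \<Gamma> k ?J L x * \<Gamma> L ?I k x) = 0"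
  proof (intro sum.neutral ballI)
    fix k L assume "k \<in> {..<n}" "L \<in> {..<n}"
    then show "\<Gamma> k k L x * \<Gamma> L ?I ?J x - \<Gamma> k ?J L x * \<Gamma> L ?I k x = 0"
      using Z1[of L] Z2[of k L] by simp
  qed
  show ?thesis unfolding ricci_def A B by simp
qed

lemma sum_pd_chr_ff:
  assumes x: "x \<in> W" and l: "l < m" "c < s l" "d < s l"
  shows "(\<Sum>k<n. pd k (\<Gamma> k (off s l + c) (off s l + d)) x - pd (off s l + d) (\<Gamma> k (off s l + c) k) x) =
     p l * (H' (x 0) + 2 * p l * (H (x 0))\<^sup>2) * T l (x 0) * g l (fib l x) c d +
     (\<Sum>e<s l. pd e (\<Gamma>F l e c d) (fib l x) - pd d (\<Gamma>F l e c e) (fib l x))"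
proof -
  let ?I = "off s l + c" and ?J = "off s l + d"
  have "(\<Sum>k<n. pd k (\<Gamma> k ?I ?J) x - pd ?J (\<Gamma> k ?I k) x) =
     p l * (H' (x 0) + 2 * p l * (H (x 0))\<^sup>2) * T l (x 0) * g l (fib l x) c d +
     (\<Sum>l2<m. \<Sum>e<s l2. pd (off s l2 + e) (\<Gamma> (off s l2 + e) ?I ?J) x
                        - pd ?J (\<Gamma> (off s l2 + e) ?I (off s l2 + e)) x)"
    using x l by (simp add: sum_wp_dim_split pd_time_chr_tff pd_chr_tft off_add_lt_wp_dim)
  also have "(\<Sum>l2<m. \<Sum>e<s l2. pd (off s l2 + e) (\<Gamma> (off s l2 + e) ?I ?J) x
                        - pd ?J (\<Gamma> (off s l2 + e) ?I (off s l2 + e)) x) =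
     (\<Sum>e<s l. pd (off s l + e) (\<Gamma> (off s l + e) ?I ?J) x - pd ?J (\<Gamma> (off s l + e) ?I (off s l + e)) x)"
    by (rule sum_blocks_single[OF l(1)]) (use x l in \<open>auto simp: pd_chr_fff_ne off_add_lt_wp_dim\<close>)
  also have "\<dots> = (\<Sum>e<s l. pd e (\<Gamma>F l e c d) (fib l x) - pd d (\<Gamma>F l e c e) (fib l x))"
    using x l by (intro sum.cong refl) (auto simp: pd_fibre_chr_fff)
  finally show ?thesis .
qed

lemma sum_chr_trace_mult_chr_ff:
  assumes x: "x \<in> W" and l: "l < m" "c < s l" "d < s l"
  shows "(\<Sum>k<n. \<Sum>L<n. \<Gamma> k k L x * \<Gamma> L (off s l + c) (off s l + d) x) =
     \<zeta> * p l * (H (x 0))\<^sup>2 * T l (x 0) * g l (fib l x) c d +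
     (\<Sum>k<s l. \<Sum>l'<s l. \<Gamma>F l k k l' (fib l x) * \<Gamma>F l l' c d (fib l x))"
proof -
  let ?I = "off s l + c" and ?J = "off s l + d" and ?h = "H (x 0)" and ?z = "fib l x"
  let ?T = "T l (x 0)" and ?g = "g l (fib l x) c d"
  have "(\<Sum>k<n. \<Sum>L<n. \<Gamma> k k L x * \<Gamma> L ?I ?J x) = (\<Sum>L<n. (\<Sum>k<n. \<Gamma> k k L x) * \<Gamma> L ?I ?J x)"
    by (subst sum.swap) (simp add: sum_distrib_right)
  also have "\<dots> = \<zeta> * ?h * (p l * ?h * ?T * ?g) +
     (\<Sum>l2<m. \<Sum>e<s l2. (\<Sum>k<n. \<Gamma> k k (off s l2 + e) x) * \<Gamma> (off s l2 + e) ?I ?J x)"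
    using x l by (subst sum_wp_dim_split) (simp add: chr_trace_t chr_tff)
  also have "(\<Sum>l2<m. \<Sum>e<s l2. (\<Sum>k<n. \<Gamma> k k (off s l2 + e) x) * \<Gamma> (off s l2 + e) ?I ?J x) =
     (\<Sum>e<s l. (\<Sum>k<n. \<Gamma> k k (off s l + e) x) * \<Gamma> (off s l + e) ?I ?J x)"
    by (rule sum_blocks_single[OF l(1)]) (use x l in \<open>auto simp: chr_fff\<close>)
  also have "\<dots> = (\<Sum>e<s l. (\<Sum>k<s l. \<Gamma>F l k k e ?z) * \<Gamma>F l e c d ?z)"
    using x l by (intro sum.cong refl) (auto simp: chr_trace_f chr_fff)
  also have "\<dots> = (\<Sum>k<s l. \<Sum>l'<s l. \<Gamma>F l k k l' ?z * \<Gamma>F l l' c d ?z)"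
    by (subst sum.swap) (simp add: sum_distrib_right)
  finally show ?thesis by (simp add: power2_eq_square mult_ac)
qed

lemma sum_chr_mult_chr_ff:
  assumes x: "x \<in> W" and l: "l < m" "c < s l" "d < s l"
  shows "(\<Sum>k<n. \<Sum>L<n. \<Gamma> k (off s l + d) L x * \<Gamma> L (off s l + c) k x) =
     2 * (p l)\<^sup>2 * (H (x 0))\<^sup>2 * T l (x 0) * g l (fib l x) c d +
     (\<Sum>k<s l. \<Sum>l'<s l. \<Gamma>F l k d l' (fib l x) * \<Gamma>F l l' c k (fib l x))"
proof -
  let ?I = "off s l + c" and ?J = "off s l + d" and ?h = "H (x 0)" and ?z = "fib l x"
  let ?T = "T l (x 0)" and ?g = "g l (fib l x) c d"
  have "(\<Sum>k<n. \<Sum>L<n. \<Gamma> k ?J L x * \<Gamma> L ?I k x) =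
     (\<Sum>L<n. \<Gamma> 0 ?J L x * \<Gamma> L ?I 0 x) +
     (\<Sum>l3<m. \<Sum>f<s l3. \<Gamma> (off s l3 + f) ?J 0 x * \<Gamma> 0 ?I (off s l3 + f) x) +
     (\<Sum>l3<m. \<Sum>f<s l3. \<Sum>l2<m. \<Sum>e<s l2.
        \<Gamma> (off s l3 + f) ?J (off s l2 + e) x * \<Gamma> (off s l2 + e) ?I (off s l3 + f) x)"
    by (subst (1 2) sum_wp_dim_split) (simp add: sum.distrib add.assoc)
  also have "(\<Sum>L<n. \<Gamma> 0 ?J L x * \<Gamma> L ?I 0 x) = (p l * ?h * ?T * ?g) * (p l * ?h)"
    using x l fibre_sym[OF l(1) W_fib[OF x l(1)], of d c] by (simp add: sum_mult_chr_Lft chr_tff)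
  also have "(\<Sum>l3<m. \<Sum>f<s l3. \<Gamma> (off s l3 + f) ?J 0 x * \<Gamma> 0 ?I (off s l3 + f) x) =
      \<Gamma> ?J ?J 0 x * \<Gamma> 0 ?I ?J x"
    by (rule sum_blocks_point[where s=s and m=m, OF l(1,3)]) (use x l in \<open>auto simp: chr_fft\<close>)
  also have "\<dots> = (p l * ?h) * (p l * ?h * ?T * ?g)"
    using x l by (simp add: chr_fft chr_tff)
  also have "(\<Sum>l3<m. \<Sum>f<s l3. \<Sum>l2<m. \<Sum>e<s l2.
        \<Gamma> (off s l3 + f) ?J (off s l2 + e) x * \<Gamma> (off s l2 + e) ?I (off s l3 + f) x) =
     (\<Sum>f<s l. \<Sum>e<s l. \<Gamma> (off s l + f) ?J (off s l + e) x * \<Gamma> (off s l + e) ?I (off s l + f) x)"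
  proof -
    have "(\<Sum>l3<m. \<Sum>f<s l3. \<Sum>l2<m. \<Sum>e<s l2.
        \<Gamma> (off s l3 + f) ?J (off s l2 + e) x * \<Gamma> (off s l2 + e) ?I (off s l3 + f) x) =
      (\<Sum>f<s l. \<Sum>l2<m. \<Sum>e<s l2.
        \<Gamma> (off s l + f) ?J (off s l2 + e) x * \<Gamma> (off s l2 + e) ?I (off s l + f) x)"
      by (rule sum_blocks_single[OF l(1)]) (use x l in \<open>auto simp: chr_fff intro!: sum.neutral\<close>)
    also have "\<dots> = (\<Sum>f<s l. \<Sum>e<s l.
        \<Gamma> (off s l + f) ?J (off s l + e) x * \<Gamma> (off s l + e) ?I (off s l + f) x)"
      by (intro sum.cong refl sum_blocks_single[OF l(1)]) (use x l in \<open>auto simp: chr_fff\<close>)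
    finally show ?thesis .
  qed
  also have "\<dots> = (\<Sum>k<s l. \<Sum>l'<s l. \<Gamma>F l k d l' ?z * \<Gamma>F l l' c k ?z)"
    using x l by (intro sum.cong refl) (auto simp: chr_fff)
  finally show ?thesis by (simp add: power2_eq_square algebra_simps)
qed

lemma ricci_ff:
  assumes x: "x \<in> W" and l: "l < m" "c < s l" "d < s l"
  shows "ricci n G x (off s l + c) (off s l + d) =
    ricci (s l) (g l) (fib l x) c d + p l * (H' (x 0) + \<zeta> * (H (x 0))\<^sup>2) * T l (x 0) * g l (fib l x) c d"
proof -
  let ?I = "off s l + c" and ?J = "off s l + d"
  have quadratic: "(\<Sum>k<n. \<Sum>L<n. \<Gamma> k k L x * \<Gamma> L ?I ?J x - \<Gamma> k ?J L x * \<Gamma> L ?I k x) =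
     (\<zeta> * p l * (H (x 0))\<^sup>2 * T l (x 0) * g l (fib l x) c d +
      (\<Sum>k<s l. \<Sum>l'<s l. \<Gamma>F l k k l' (fib l x) * \<Gamma>F l l' c d (fib l x))) -
     (2 * (p l)\<^sup>2 * (H (x 0))\<^sup>2 * T l (x 0) * g l (fib l x) c d +
      (\<Sum>k<s l. \<Sum>l'<s l. \<Gamma>F l k d l' (fib l x) * \<Gamma>F l l' c k (fib l x)))"
    by (simp only: sum_subtractf sum_chr_trace_mult_chr_ff[OF x l] sum_chr_mult_chr_ff[OF x l])
  have ricci_fibre: "ricci (s l) (g l) (fib l x) c d =
      (\<Sum>k<s l. pd k (\<Gamma>F l k c d) (fib l x) - pd d (\<Gamma>F l k c k) (fib l x)) +
      ((\<Sum>k<s l. \<Sum>l'<s l. \<Gamma>F l k k l' (fib l x) * \<Gamma>F l l' c d (fib l x)) -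
       (\<Sum>k<s l. \<Sum>l'<s l. \<Gamma>F l k d l' (fib l x) * \<Gamma>F l l' c k (fib l x)))"
    unfolding ricci_def by (simp add: sum_subtractf)
  show ?thesis
    unfolding ricci_def[of n G] sum_pd_chr_ff[OF x l] quadratic ricci_fibre
    by (simp add: algebra_simps power2_eq_square)
qed

lemma ricci_flat_on_G:
  assumes fibres_flat: "\<And>l. l < m \<Longrightarrow> ricci_flat_on (s l) (U l) (g l)"
    and H_ode: "\<And>t. t > 0 \<Longrightarrow> H' t = - \<zeta> * (H t)\<^sup>2" and eta: "\<eta> = \<zeta>\<^sup>2"
  shows "ricci_flat_on n W G"
  unfolding ricci_flat_on_def
proof (intro ballI allI impI)
  fix x i j assume x: "x \<in> W" and i: "i < n" and j: "j < n"
  have H': "H' (x 0) = - \<zeta> * (H (x 0))\<^sup>2" using H_ode[OF W_pos[OF x]] .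
  show "ricci n G x i j = 0"
  proof (cases rule: wp_index_cases[OF i])
    case 1
    have "ricci n G x 0 0 = 0"
      using ricci_tt[OF x] unfolding H' eta by (simp add: power2_eq_square)
    with 1 show ?thesis by (cases rule: wp_index_cases[OF j]) (auto simp: ricci_tf[OF x])
  next
    case (2 l c)
    show ?thesis
    proof (cases rule: wp_index_cases[OF j])
      case 1 then show ?thesis using 2 by (simp add: ricci_ft[OF x])
    next
      case (2 l' d)
      have "ricci (s l) (g l) (fib l x) c d = 0" if "l = l'"
        using fibres_flat[OF \<open>l < m\<close>] W_fib[OF x \<open>l < m\<close>] \<open>c < s l\<close> \<open>d < s l'\<close> that
        by (simp add: ricci_flat_on_def)
      then show ?thesis using \<open>i = off s l + c\<close> \<open>l < m\<close> \<open>c < s l\<close> 2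
        by (cases "l = l'") (simp_all add: ricci_ff[OF x] ricci_ff_ne[OF x] H')
    qed
  qed
qed

subsection \<open>Smoothness and signature\<close>

definition time_fibre_indices :: "nat \<Rightarrow> nat list \<Rightarrow> bool" where
  "time_fibre_indices l ks \<longleftrightarrow> (\<forall>k\<in>set ks. k = 0 \<or> (off s l \<le> k \<and> k < off s l + s l))"

text \<open>The iterated partial derivative \<open>ipd ks\<close> of \<open>\<lambda>y. D 0 (y 0) * B (fib l y)\<close>, where
\<open>D k\<close> is the k-th derivative of \<open>D 0\<close>: time derivatives fall on the first factor,
derivatives along the l-th fibre on the second, and any other coordinate kills the product.\<close>
definition time_fibre_ipd ::
    "(nat \<Rightarrow> real \<Rightarrow> real) \<Rightarrow> ((nat \<Rightarrow> real) \<Rightarrow> real) \<Rightarrow> nat \<Rightarrow> nat list \<Rightarrow>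
     (nat \<Rightarrow> real) \<Rightarrow> real" where
  "time_fibre_ipd D B l ks y =
     (if time_fibre_indices l ks
      then D (length (filter (\<lambda>k. k = 0) ks)) (y 0) *
           ipd (map (\<lambda>k. k - off s l) (filter (\<lambda>k. k \<noteq> 0) ks)) B (fib l y)
      else 0)"

lemma time_fibre_ipd_other_fibre:
  assumes "l' \<noteq> l" "e < s l'"
  shows "time_fibre_ipd D B l ((off s l' + e) # ks) y = 0"
proof -
  have "\<not> (off s l \<le> off s l' + e \<and> off s l' + e < off s l + s l)"
    using off_block_unique[of e s l' l] assms by auto
  then show ?thesis by (auto simp: time_fibre_ipd_def time_fibre_indices_def)
qed

context
  fixes l :: nat and D :: "nat \<Rightarrow> real \<Rightarrow> real" and B :: "(nat \<Rightarrow> real) \<Rightarrow> real"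
  assumes l: "l < m"
    and D_deriv: "\<And>k t. t > 0 \<Longrightarrow> (D k has_real_derivative D (Suc k) t) (at t)"
    and B_smooth: "smooth_on (s l) (U l) B"
begin

lemma fibre_indices_subset:
  "time_fibre_indices l ks \<Longrightarrow> set (map (\<lambda>k. k - off s l) (filter (\<lambda>k. k \<noteq> 0) ks)) \<subseteq> {..<s l}"
  unfolding time_fibre_indices_def by auto

lemma ipd_B_smooth:
  "set ks \<subseteq> {..<s l} \<Longrightarrow> continuous_on (U l) (ipd ks B) \<and>
     (\<forall>z\<in>U l. \<forall>k<s l. (\<lambda>h. ipd ks B (z(k := z k + h))) differentiable (at 0))"
  using B_smooth unfolding smooth_on_def by blast

lemma DERIV_time_fibre_ipd:
  assumes x: "x \<in> W" and k: "k < n"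
  shows "DERIV (\<lambda>h. time_fibre_ipd D B l ks (x(k := x k + h))) 0 :> time_fibre_ipd D B l (k # ks) x"
proof (cases "time_fibre_indices l ks")
  case False
  then have "\<not> time_fibre_indices l (k # ks)" by (simp add: time_fibre_indices_def)
  with False show ?thesis by (simp add: time_fibre_ipd_def)
next
  case True
  let ?z = "length (filter (\<lambda>k. k = 0) ks)"
  let ?C = "ipd (map (\<lambda>k. k - off s l) (filter (\<lambda>k. k \<noteq> 0) ks)) B"
  have R_eq: "time_fibre_ipd D B l ks = (\<lambda>y. D ?z (y 0) * ?C (fib l y))"
    using True by (simp add: time_fibre_ipd_def fun_eq_iff)
  show ?thesis using k
  proof (cases rule: wp_index_cases)
    case 1
    then have "time_fibre_ipd D B l (k # ks) x = D (Suc ?z) (x 0) * ?C (fib l x)"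
      using True by (simp add: time_fibre_ipd_def time_fibre_indices_def)
    then show ?thesis unfolding R_eq 1
      using DERIV_time_line_product[where A="D ?z" and B="?C" and s=s and l=l and x=x,
          OF D_deriv[OF W_pos[OF x]]] by simp
  next
    case (2 l' e)
    show ?thesis
    proof (cases "l' = l")
      case True2: True
      then have "time_fibre_ipd D B l (k # ks) x = D ?z (x 0) * pd e ?C (fib l x)"
        using True 2 by (simp add: time_fibre_ipd_def time_fibre_indices_def)
      moreover have "DERIV (\<lambda>h. ?C ((fib l x)(e := fib l x e + h))) 0 :> pd e ?C (fib l x)"
        using ipd_B_smooth[OF fibre_indices_subset[OF True]] W_fib[OF x l] 2 True2
        by (intro pd_DERIV) auto
      ultimately show ?thesis unfolding R_eq 2 True2
        using DERIV_fibre_line_product[where A="D ?z" and B="?C" and s=s and l=l and x=x and c=e] 2 True2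
        by simp
    next
      case False2: False
      then show ?thesis unfolding R_eq 2 time_fibre_ipd_other_fibre[OF False2 \<open>e < s l'\<close>]
        using DERIV_other_fibre_line_product[where A="D ?z" and B="?C" and s=s and l=l and l'=l' and c=e]
          2 False2 by simp
    qed
  qed
qed

lemma ipd_time_fibre_product:
  "set ks \<subseteq> {..<n} \<Longrightarrow> y \<in> W \<Longrightarrow> ipd ks (\<lambda>y. D 0 (y 0) * B (fib l y)) y = time_fibre_ipd D B l ks y"
proof (induction ks arbitrary: y)
  case Nil then show ?case by (simp add: time_fibre_ipd_def time_fibre_indices_def)
next
  case (Cons k ks)
  have "ipd (k # ks) (\<lambda>y. D 0 (y 0) * B (fib l y)) y = pd k (time_fibre_ipd D B l ks) y"
    using Cons by (simp, intro pd_cong_W) auto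
  also have "\<dots> = time_fibre_ipd D B l (k # ks) y"
    using DERIV_time_fibre_ipd[of y k ks] Cons.prems by (intro pd_eqI) auto
  finally show ?case .
qed

lemma continuous_on_time_fibre_ipd: "continuous_on W (time_fibre_ipd D B l ks)"
proof (cases "time_fibre_indices l ks")
  case False
  then show ?thesis by (simp add: time_fibre_ipd_def)
next
  case True
  have "continuous_on {0<..} (D k)" for k
    by (intro continuous_at_imp_continuous_on ballI DERIV_isCont[OF D_deriv]) simp
  then have "continuous_on W (\<lambda>y. D k (y 0))" for k
    by (rule continuous_on_compose2[OF _ continuous_on_subset[OF continuous_on_product_coordinates]])
       (auto simp: W_pos)
  moreover have "continuous_on W (\<lambda>y. ipd ks' B (fib l y))" if "set ks' \<subseteq> {..<s l}" for ks'
    by (rule continuous_on_compose2[OF conjunct1[OF ipd_B_smooth[OF that]] continuous_on_fib])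
       (auto simp: W_fib l)
  ultimately show ?thesis
    using True fibre_indices_subset[OF True] by (simp add: time_fibre_ipd_def continuous_on_mult)
qed

lemma smooth_on_time_fibre_product: "smooth_on n W (\<lambda>y. D 0 (y 0) * B (fib l y))"
  unfolding smooth_on_def
proof (intro allI impI conjI ballI)
  fix ks assume ks: "set ks \<subseteq> {..<n}"
  show "continuous_on W (ipd ks (\<lambda>y. D 0 (y 0) * B (fib l y)))"
    by (rule continuous_on_eq[OF continuous_on_time_fibre_ipd]) (simp add: ipd_time_fibre_product[OF ks])
  fix x k assume x: "x \<in> W" and k: "k < n"
  show "(\<lambda>h. ipd ks (\<lambda>y. D 0 (y 0) * B (fib l y)) (x(k := x k + h))) differentiable (at 0)"
    by (rule coordinate_line_differentiable_cong[OF W_open x k ipd_time_fibre_product[OF ks]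
          DERIV_time_fibre_ipd[OF x k]])
qed

end

lemma smooth_on_G: assumes "i < n" "j < n" shows "smooth_on n W (\<lambda>x. G x i j)"
  using assms(1)
proof (cases rule: wp_index_cases)
  case 1
  show ?thesis using assms(2)
    by (cases rule: wp_index_cases) (use 1 in \<open>simp_all add: G_tt G_tf smooth_on_const\<close>)
next
  case (2 l c)
  show ?thesis using assms(2)
  proof (cases rule: wp_index_cases)
    case 1
    then show ?thesis using 2 by (simp add: G_ft smooth_on_const)
  next
    case (2 l' d)
    note ld = this
    show ?thesis
    proof (cases "l = l'")
      case False
      then show ?thesis using \<open>i = off s l + c\<close> ld \<open>l < m\<close> \<open>c < s l\<close> by (simp add: G_ff_ne smooth_on_const)
    next
      case True
      obtain D where D0: "\<And>t. t > 0 \<Longrightarrow> D 0 t = T l t"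
        and D_deriv: "\<And>k t. t > 0 \<Longrightarrow> (D k has_real_derivative D (Suc k) t) (at t)"
        using warp_powr_smooth[OF \<open>l < m\<close>] unfolding smooth_real_on_def T_def by auto
      have "d < s l" using ld True by simp
      have "smooth_on n W (\<lambda>y. D 0 (y 0) * g l (fib l y) c d)"
        by (rule smooth_on_time_fibre_product[where l=l and D=D, OF \<open>l < m\<close> D_deriv
              fibre_smooth[OF \<open>l < m\<close> \<open>c < s l\<close> \<open>d < s l\<close>]])
      then show ?thesis
        by (rule smooth_on_cong[OF W_open, rotated])
           (use \<open>i = off s l + c\<close> ld True \<open>l < m\<close> \<open>c < s l\<close> in \<open>auto simp: G_ff W_pos D0\<close>)
    qed
  qed
qed

lemma semi_riem_metric_G: "semi_riem_metric n W G"
  unfolding semi_riem_metric_def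
  using W_open smooth_on_G G_sym is_inverse_mat_G by blast

lemma fibre_quadratic_form_nonneg:
  assumes "l < m" "z \<in> U l"
  shows "(\<Sum>c<s l. \<Sum>d<s l. g l z c d * w c * w d) \<ge> 0"
  using fibre_riem[OF assms(1)] assms(2) unfolding riem_metric_def
  by (cases "\<exists>c<s l. w c \<noteq> 0") (auto intro: less_imp_le)

lemma quadratic_form_G_spatial:
  assumes x: "x \<in> W" and v0: "v 0 = 0"
  shows "(\<Sum>i<n. \<Sum>j<n. G x i j * v i * v j) =
    (\<Sum>l<m. T l (x 0) * (\<Sum>c<s l. \<Sum>d<s l. g l (fib l x) c d * v (off s l + c) * v (off s l + d)))"
proof -
  have row: "(\<Sum>j<n. G x (off s l + c) j * v (off s l + c) * v j) =
      T l (x 0) * (\<Sum>d<s l. g l (fib l x) c d * v (off s l + c) * v (off s l + d))"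
    if l: "l < m" "c < s l" for l c
  proof -
    have "(\<Sum>j<n. G x (off s l + c) j * v (off s l + c) * v j) =
        (\<Sum>l2<m. \<Sum>d<s l2. G x (off s l + c) (off s l2 + d) * v (off s l + c) * v (off s l2 + d))"
      using v0 by (simp add: sum_wp_dim_split)
    also have "\<dots> = (\<Sum>d<s l. G x (off s l + c) (off s l + d) * v (off s l + c) * v (off s l + d))"
      by (rule sum_blocks_single[OF l(1)]) (use l in \<open>auto simp: G_ff_ne\<close>)
    also have "\<dots> = T l (x 0) * (\<Sum>d<s l. g l (fib l x) c d * v (off s l + c) * v (off s l + d))"
      using l by (simp add: G_ff sum_distrib_left mult_ac)
    finally show ?thesis .
  qed
  have "(\<Sum>i<n. \<Sum>j<n. G x i j * v i * v j) =
      (\<Sum>l<m. \<Sum>c<s l. \<Sum>j<n. G x (off s l + c) j * v (off s l + c) * v j)"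
    using v0 by (subst sum_wp_dim_split) simp
  also have "\<dots> = (\<Sum>l<m. T l (x 0) *
      (\<Sum>c<s l. \<Sum>d<s l. g l (fib l x) c d * v (off s l + c) * v (off s l + d)))"
    by (intro sum.cong refl) (simp add: row sum_distrib_left)
  finally show ?thesis .
qed

lemma quadratic_form_G_spatial_pos:
  assumes x: "x \<in> W" and v0: "v 0 = 0" and v: "\<exists>i<n. v i \<noteq> 0"
  shows "(\<Sum>i<n. \<Sum>j<n. G x i j * v i * v j) > 0"
proof -
  let ?Q = "\<lambda>l. \<Sum>c<s l. \<Sum>d<s l. g l (fib l x) c d * v (off s l + c) * v (off s l + d)"
  obtain i where i: "i < n" "v i \<noteq> 0" using v by blast
  obtain l0 c0 where l0: "l0 < m" "c0 < s l0" "i = off s l0 + c0"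
    using i v0 by (cases rule: wp_index_cases[OF i(1)]) auto
  have pos: "\<forall>w. (\<exists>c<s l0. w c \<noteq> 0) \<longrightarrow> 0 < (\<Sum>c<s l0. \<Sum>d<s l0. g l0 (fib l0 x) c d * w c * w d)"
    using fibre_riem[OF l0(1)] W_fib[OF x l0(1)] unfolding riem_metric_def by blast
  have "\<exists>c<s l0. v (off s l0 + c) \<noteq> 0" using l0 i by auto
  then have "?Q l0 > 0" using pos[rule_format, of "\<lambda>c. v (off s l0 + c)"] by simp
  then have "T l0 (x 0) * ?Q l0 > 0" using T_pos[OF W_pos[OF x]] by simp
  moreover have "T l (x 0) * ?Q l \<ge> 0" if "l < m" for l
    using fibre_quadratic_form_nonneg[OF that W_fib[OF x that]] T_pos[OF W_pos[OF x], of l] by simp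
  ultimately have "(\<Sum>l<m. T l (x 0) * ?Q l) > 0"
    using l0 by (intro sum_pos2[of "{..<m}" l0]) auto
  then show ?thesis using quadratic_form_G_spatial[where v=v, OF x v0] by simp
qed

lemma lorentz_metric_G: "lorentz_metric n W G"
  unfolding lorentz_metric_def
  using semi_riem_metric_G quadratic_form_G_spatial_pos by (simp add: G_tt wp_dim_def)

end

section \<open>Affine warping\<close>

lemma smooth_real_on_affine_powr:
  assumes pos: "\<And>t. t \<in> S \<Longrightarrow> a * t + b > 0"
  shows "smooth_real_on S (\<lambda>t. (a * t + b) powr r)"
proof -
  define D where "D k t = (\<Prod>i<k. r - real i) * a ^ k * (a * t + b) powr (r - real k)" for k t
  have "(D k has_real_derivative D (Suc k) t) (at t)" if t: "t \<in> S" for k t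
  proof -
    have "(D k has_real_derivative
        (\<Prod>i<k. r - real i) * a ^ k * ((r - real k) * (a * t + b) powr (r - real k - 1) * a)) (at t)"
      unfolding D_def using pos[OF t] by (auto intro!: derivative_eq_intros)
    moreover have "(\<Prod>i<k. r - real i) * a ^ k * ((r - real k) * (a * t + b) powr (r - real k - 1) * a)
        = D (Suc k) t"
      by (simp add: D_def algebra_simps diff_diff_eq)
    ultimately show ?thesis by simp
  qed
  then show ?thesis unfolding smooth_real_on_def by (intro exI[of _ D]) (simp add: D_def)
qed

lemma affine_pos:
  fixes a b t :: real
  assumes "a \<ge> 0" "b \<ge> 0" "a\<^sup>2 + b\<^sup>2 > 0" "t > 0"
  shows "a * t + b > 0"
proof (cases "a = 0")
  case True
  then show ?thesis using assms by (simp add: less_le)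
next
  case False
  then show ?thesis using assms by (simp add: add_pos_nonneg)
qed

lemma multiply_warped_product_affine_root:
  fixes \<zeta> a b :: real
  assumes fibres: "\<And>l. l < m \<Longrightarrow> riem_metric (s l) (U l) (g l)"
    and "\<zeta> \<noteq> 0" and ab: "a \<ge> 0" "b \<ge> 0" "a\<^sup>2 + b\<^sup>2 > 0"
  shows "multiply_warped_product m s U g p (\<lambda>t. (a * t + b) powr (1 / \<zeta>))
    (\<lambda>t. a / (\<zeta> * (a * t + b))) (\<lambda>t. - \<zeta> * (a / (\<zeta> * (a * t + b)))\<^sup>2)"
proof
  fix t :: real assume "t > 0"
  then have pos: "a * t + b > 0" by (rule affine_pos[OF ab])
  then show "(a * t + b) powr (1 / \<zeta>) > 0" by simp
  show "((\<lambda>t. (a * t + b) powr (1 / \<zeta>)) has_real_derivative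
      a / (\<zeta> * (a * t + b)) * (a * t + b) powr (1 / \<zeta>)) (at t)"
    using pos by (auto intro!: derivative_eq_intros simp: powr_diff field_simps)
  show "((\<lambda>t. a / (\<zeta> * (a * t + b))) has_real_derivative - \<zeta> * (a / (\<zeta> * (a * t + b)))\<^sup>2) (at t)"
  proof -
    have "\<zeta> * (a * t + b) \<noteq> 0" using pos \<open>\<zeta> \<noteq> 0\<close> by simp
    then show ?thesis by (auto intro!: derivative_eq_intros simp: field_simps power2_eq_square)
  qed
next
  fix l assume "l < m"
  have "smooth_real_on {0<..} (\<lambda>t. (a * t + b) powr (2 * p l / \<zeta>))"
    by (rule smooth_real_on_affine_powr) (use affine_pos[OF ab] in auto)
  then show "smooth_real_on {0<..} (\<lambda>t. ((a * t + b) powr (1 / \<zeta>)) powr (2 * p l))"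
    using affine_pos[OF ab] by (simp add: smooth_real_on_def powr_powr)
qed (rule fibres)

theorem corollary4p9:
  fixes m :: nat and s :: "nat \<Rightarrow> nat" and U :: "nat \<Rightarrow> (nat \<Rightarrow> real) set"
    and g :: "nat \<Rightarrow> metric" and p :: "nat \<Rightarrow> real"
    and \<zeta> \<eta> \<zeta>' \<eta>' a b :: real
  assumes fibres: "\<forall>i<m. riem_metric (s i) (U i) (g i) \<and> ricci_flat_on (s i) (U i) (g i)"
    and zeta_def: "\<zeta> = (\<Sum>l<m. real (s l) * p l)"
    and eta_def: "\<eta> = (\<Sum>l<m. real (s l) * (p l)\<^sup>2)"
    and "\<zeta>' \<noteq> 0" and "\<eta>' \<noteq> 0" and "\<zeta>'\<^sup>2 = \<eta>'"
    and "a \<ge> 0" and "b \<ge> 0" and "a\<^sup>2 + b\<^sup>2 > 0"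
    and "\<zeta> = \<zeta>'" and "\<eta> = \<eta>'"
    and "\<forall>i<m. \<zeta> - p i \<noteq> 0" and "\<forall>i<m. \<eta> - p i * \<zeta> \<noteq> 0"
  shows "lorentz_metric (wp_dim m s) (wp_domain m s U)
           (wp_metric m s g (\<lambda>t. (a * t + b) powr (1 / \<zeta>)) p)
       \<and> ricci_flat_on (wp_dim m s) (wp_domain m s U)
           (wp_metric m s g (\<lambda>t. (a * t + b) powr (1 / \<zeta>)) p)"
proof -
  have "\<zeta> \<noteq> 0" using assms(4,10) by simp
  interpret multiply_warped_product m s U g p "\<lambda>t. (a * t + b) powr (1 / \<zeta>)"
      "\<lambda>t. a / (\<zeta> * (a * t + b))" "\<lambda>t. - \<zeta> * (a / (\<zeta> * (a * t + b)))\<^sup>2"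
    by (rule multiply_warped_product_affine_root) (use fibres \<open>\<zeta> \<noteq> 0\<close> assms(7-9) in auto)
  have "ricci_flat_on (wp_dim m s) (wp_domain m s U) G"
    by (rule ricci_flat_on_G) (use fibres zeta_def eta_def assms(6,10,11) in auto)
  then show ?thesis using lorentz_metric_G unfolding G_def by simp
qed

end
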